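(* Let $S_\lambda\in\mathcal B(\ell^2(V))$ be a $2$-isometric weighted shift on a rooted directed tree $\mathcal T=(V,E)$ with root $\omega$ and weights $\{\lambda_v\}_{v\in V^\circ}$, and suppose there is $\{\alpha_v\}_{v\in V}\subseteq\mathbb R_+$ with $\|S_\lambda e_u\|=\alpha_{\mathrm{par}(u)}$ for all $u\in V^\circ$. Then $\mathcal T$ is leafless and $$S_\lambda\cong S_{[x]}\oplus\bigoplus_{k=1}^\infty\big(S_{[\xi_k(x)]}\big)^{\oplus j_k},$$ where $x=\|S_\lambda e_\omega\|$ and $j_k=\mathfrak j^{\mathcal T}_k$ for $k\in\mathbb N$. Moreover, if all weights are nonzero, then $j_k\le\aleph_0$ for all $k$.
   Context: A directed tree $\mathcal T=(V,E)$ is a connected directed graph without circuits with each vertex having at most one parent; $\omega$ denotes the root, $V^\circ=V\setminus\{\omega\}$, $\mathrm{par}(v)$ is the parent, $\mathrm{Chi}(u)$ the set of children, $\deg u=\#\mathrm{Chi}(u)$, $\mathrm{Chi}^0(\omega)=\{\omega\}$, $\mathrm{Chi}^{n}(\omega)=\bigcup_{u\in\mathrm{Chi}^{n-1}(\omega)}\mathrm{Chi}(u)$. The weighted shift is $(S_\lambda f)(v)=\lambda_vf(\mathrm{par}(v))$, $(S_\lambda f)(\omega)=0$; $e_u$ is the indicator of $\{u\}$. $2$-isometry: $I-2T^*T+T^{*2}T^2=0$. $\xi_n(x)=\sqrt{\frac{1+(n+1)(x^2-1)}{1+n(x^2-1)}}$. For $x\ge1$, $S_{[x]}$ is the unilateral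 weighted shift in $\ell^2(\mathbb Z_+)$ with weights $\{\xi_n(x)\}_{n\ge0}$. For a leafless tree, the $k$th generation branching degree is $\mathfrak j^{\mathcal T}_k=\sum_{u\in\mathrm{Chi}^{k-1}(\omega)}(\deg u-1)$. $A^{\oplus\mathfrak n}$ is the $\mathfrak n$-fold orthogonal sum of copies of $A$ ($A^{\oplus0}=0$ on the zero space). *)

theory Defs
  imports "HOL-Analysis.Analysis"
begin

section \<open>Rooted directed trees (vertex set = the whole type 'v)\<close>

text \<open>A rooted directed tree on the vertex type 'v is given by its rt and its
parent map par; by convention par rt = rt (the rt has no parent).
Every vertex reaches the rt by iterating par, which gives connectedness and
absence of circuits.\<close>

definition rooted_tree :: "('v \<Rightarrow> 'v) \<Rightarrow> 'v \<Rightarrow> bool" where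
  "rooted_tree par rt \<longleftrightarrow> par rt = rt \<and> (\<forall>v. \<exists>n. (par ^^ n) v = rt)"

definition children :: "('v \<Rightarrow> 'v) \<Rightarrow> 'v \<Rightarrow> 'v \<Rightarrow> 'v set" where
  "children par rt u = {v. v \<noteq> rt \<and> par v = u}"

definition leafless :: "('v \<Rightarrow> 'v) \<Rightarrow> 'v \<Rightarrow> bool" where
  "leafless par rt \<longleftrightarrow> (\<forall>u. children par rt u \<noteq> {})"

primrec generation :: "('v \<Rightarrow> 'v) \<Rightarrow> 'v \<Rightarrow> nat \<Rightarrow> 'v set" where
  "generation par rt 0 = {rt}"
| "generation par rt (Suc n) = (\<Union>u\<in>generation par rt n. children par rt u)"

text \<open>A set whose cardinality is the k-th generation branching degree
  j_k = sum over u in Chi^(k-1)(rt) of (deg u - 1) (cardinal arithmetic; for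
  leafless trees): the disjoint union over u of Chi(u) with one child removed.\<close>
definition branching_set :: "('v \<Rightarrow> 'v) \<Rightarrow> 'v \<Rightarrow> nat \<Rightarrow> ('v \<times> 'v) set" where
  "branching_set par rt k =
     (SIGMA u:generation par rt (k - 1).
        children par rt u - {SOME w. w \<in> children par rt u})"

definition l2 :: "'a set \<Rightarrow> ('a \<Rightarrow> complex) set" where
  "l2 A = {f. (\<forall>a. a \<notin> A \<longrightarrow> f a = 0) \<and> (\<lambda>a. (cmod (f a))\<^sup>2) summable_on A}"

definition l2_inner :: "('a \<Rightarrow> complex) \<Rightarrow> ('a \<Rightarrow> complex) \<Rightarrow> complex" where
  "l2_inner f g = (\<Sum>\<^sub>\<infinity>a. f a * cnj (g a))"

definition l2_norm :: "('a \<Rightarrow> complex) \<Rightarrow> real" where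
  "l2_norm f = sqrt (\<Sum>\<^sub>\<infinity>a. (cmod (f a))\<^sup>2)"

definition unit_vec :: "'a \<Rightarrow> 'a \<Rightarrow> complex" where
  "unit_vec u = (\<lambda>v. if v = u then 1 else 0)"

definition bounded_on_l2 :: "'a set \<Rightarrow> (('a \<Rightarrow> complex) \<Rightarrow> ('a \<Rightarrow> complex)) \<Rightarrow> bool" where
  "bounded_on_l2 A T \<longleftrightarrow>
     (\<forall>f\<in>l2 A. T f \<in> l2 A) \<and>
     (\<forall>f\<in>l2 A. \<forall>g\<in>l2 A. \<forall>c. T (\<lambda>a. c * f a + g a) = (\<lambda>a. c * T f a + T g a)) \<and>
     (\<exists>C. \<forall>f\<in>l2 A. l2_norm (T f) \<le> C * l2_norm f)"

text \<open>2-isometry: I - 2 T*T + T*^2 T^2 = 0, i.e. the sesquilinear form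
  <(I - 2T*T + T*^2T^2) f, g> = <f,g> - 2<Tf,Tg> + <T^2 f, T^2 g> vanishes.\<close>
definition two_isometry :: "'a set \<Rightarrow> (('a \<Rightarrow> complex) \<Rightarrow> ('a \<Rightarrow> complex)) \<Rightarrow> bool" where
  "two_isometry A T \<longleftrightarrow>
     (\<forall>f\<in>l2 A. \<forall>g\<in>l2 A.
        l2_inner f g - 2 * l2_inner (T f) (T g) + l2_inner (T (T f)) (T (T g)) = 0)"

definition unitarily_equivalent ::
  "'a set \<Rightarrow> (('a \<Rightarrow> complex) \<Rightarrow> ('a \<Rightarrow> complex)) \<Rightarrow>
   'b set \<Rightarrow> (('b \<Rightarrow> complex) \<Rightarrow> ('b \<Rightarrow> complex)) \<Rightarrow> bool" where
  "unitarily_equivalent A T B R \<longleftrightarrow>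
     (\<exists>U. bij_betw U (l2 A) (l2 B) \<and>
          (\<forall>f\<in>l2 A. \<forall>g\<in>l2 A. \<forall>c. U (\<lambda>a. c * f a + g a) = (\<lambda>b. c * U f b + U g b)) \<and>
          (\<forall>f\<in>l2 A. \<forall>g\<in>l2 A. l2_inner (U f) (U g) = l2_inner f g) \<and>
          (\<forall>f\<in>l2 A. U (T f) = R (U f)))"

definition tree_shift ::
  "('v \<Rightarrow> 'v) \<Rightarrow> 'v \<Rightarrow> ('v \<Rightarrow> complex) \<Rightarrow> ('v \<Rightarrow> complex) \<Rightarrow> ('v \<Rightarrow> complex)" where
  "tree_shift par rt lam f = (\<lambda>v. if v = rt then 0 else lam v * f (par v))"

definition xi :: "nat \<Rightarrow> real \<Rightarrow> real" where
  "xi n x = sqrt ((1 + real (n + 1) * (x\<^sup>2 - 1)) / (1 + real n * (x\<^sup>2 - 1)))"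

text \<open>Orthogonal sum over j of the unilateral weighted shifts S_[y j], realised on
  l^2(J x N): the j-th copy of l^2(N) is the slice {j} x N, and
  S_[y] e_n = xi n y e_(n+1).\<close>
definition shift_sum :: "('j \<Rightarrow> real) \<Rightarrow> ('j \<times> nat \<Rightarrow> complex) \<Rightarrow> ('j \<times> nat \<Rightarrow> complex)" where
  "shift_sum y f = (\<lambda>(j, n). if n = 0 then 0 else complex_of_real (xi (n - 1) (y j)) * f (j, n - 1))"

text \<open>Index set of S_[x] (+) (+)_{k>=1} (S_[xi_k x])^(+ j_k): the index (0,rt,rt)
  carries S_[x]; the indices (k,u,v) with (u,v) in branching_set k (a set of
  cardinality j_k) carry copies of S_[xi_k(x)].\<close>
definition sum_index :: "('v \<Rightarrow> 'v) \<Rightarrow> 'v \<Rightarrow> (nat \<times> 'v \<times> 'v) set" where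
  "sum_index par rt =
     insert (0, rt, rt) {(k, u, v). k \<ge> 1 \<and> (u, v) \<in> branching_set par rt k}"

definition sum_param :: "real \<Rightarrow> nat \<times> 'v \<times> 'v \<Rightarrow> real" where
  "sum_param x = (\<lambda>(k, u, v). if k = 0 then x else xi k x)"

end

theory Submission
  imports Defs
begin

text \<open>
Testing the 2-isometry identity on the basis vector at u gives
1 - 2 ||S e_u||^2 + alpha_u^2 ||S e_u||^2 = 0, and since every child c of u has
||S e_c|| = alpha_u this is the recurrence ||S e_c||^2 = 2 - 1 / ||S e_u||^2. In particular
every vertex has children, and ||S e_u||^2 = xi_n(x)^2 only depends on the depth n of u.

Hence the normalised weight vector s_u = S e_u / ||S e_u|| lives on the children of u, and
l^2(Chi u) splits into the line through s_u and its orthogonal complement, which a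
Householder-type unitary identifies with l^2(Chi u minus one child). Writing A g (u) for the
coefficient of g along s_u, so that A S = multiplication by xi_depth(x), the map
f |-> ((A^m f)(rt), complement components of A^m f)_m is an isometry: one step of A peels off
exactly the m-th coordinates (a telescoping identity), and A^M f tends to 0 because A^M
annihilates everything above depth M. It is onto (the preimage is built generation by
generation) and turns S into the orthogonal sum of the unilateral shifts, the copy attached to
a child at depth k carrying the weights xi_(k+m)(x) = xi_m(xi_k(x)).
\<close>

section \<open>Unordered sums of extended nonnegative reals\<close>

lemma ennreal_summable_on [simp]: "(f :: 'a \<Rightarrow> ennreal) summable_on A"
  by (rule nonneg_summable_on_complete) simp

lemma ennreal_infsum_mono_set:
  fixes g :: "'a \<Rightarrow> ennreal"
  shows "C \<subseteq> D \<Longrightarrow> infsum g C \<le> infsum g D"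
  by (rule infsum_mono_neutral) auto

lemma ennreal_sum_le_infsum:
  fixes g :: "'a \<Rightarrow> ennreal"
  assumes "finite F" "F \<subseteq> C"
  shows "sum g F \<le> infsum g C"
proof -
  have "sum g F = infsum g F" using assms(1) by simp
  also have "\<dots> \<le> infsum g C" using assms(2) by (rule ennreal_infsum_mono_set)
  finally show ?thesis .
qed

lemma ennreal_infsum_of_real:
  fixes g :: "'a \<Rightarrow> real"
  assumes "g summable_on C" "\<And>a. a \<in> C \<Longrightarrow> g a \<ge> 0"
  shows "(\<Sum>\<^sub>\<infinity>a\<in>C. ennreal (g a)) = ennreal (\<Sum>\<^sub>\<infinity>a\<in>C. g a)"
proof -
  have "(\<Sum>\<^sub>\<infinity>a\<in>C. ennreal (g a)) = (SUP F\<in>{F. finite F \<and> F \<subseteq> C}. sum (\<lambda>a. ennreal (g a)) F)"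
    by (rule nonneg_infsum_complete) simp
  also have "\<dots> = (SUP F\<in>{F. finite F \<and> F \<subseteq> C}. ennreal (sum g F))"
    using assms(2) by (intro SUP_cong refl) (auto intro!: sum_ennreal)
  also have "\<dots> = ennreal (\<Sum>\<^sub>\<infinity>a\<in>C. g a)"
    using infsum_nonneg_is_SUPREMUM_ennreal[OF assms] by simp
  finally show ?thesis .
qed

lemma summable_on_if_ennreal_infsum_finite:
  fixes g :: "'a \<Rightarrow> real"
  assumes nonneg: "\<And>a. a \<in> C \<Longrightarrow> g a \<ge> 0" and fin: "(\<Sum>\<^sub>\<infinity>a\<in>C. ennreal (g a)) < \<infinity>"
  shows "g summable_on C"
proof (rule nonneg_bdd_above_summable_on[OF nonneg])
  show "bdd_above (sum g ` {F. F \<subseteq> C \<and> finite F})"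
  proof (rule bdd_aboveI2)
    fix F assume F: "F \<in> {F. F \<subseteq> C \<and> finite F}"
    have "ennreal (sum g F) = (\<Sum>a\<in>F. ennreal (g a))"
      using F nonneg by (subst sum_ennreal) auto
    also have "\<dots> \<le> (\<Sum>\<^sub>\<infinity>a\<in>C. ennreal (g a))"
      using F by (intro ennreal_sum_le_infsum) auto
    also have "\<dots> = ennreal (enn2real (\<Sum>\<^sub>\<infinity>a\<in>C. ennreal (g a)))"
      using fin by (simp add: ennreal_enn2real_if)
    finally show "sum g F \<le> enn2real (\<Sum>\<^sub>\<infinity>a\<in>C. ennreal (g a))"
      by (metis ennreal_le_iff enn2real_nonneg)
  qed
qed

lemma ennreal_infsum_Sigma_finite:
  fixes f :: "'a \<times> 'b \<Rightarrow> ennreal"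
  assumes "finite G"
  shows "infsum f (Sigma G B) = (\<Sum>x\<in>G. \<Sum>\<^sub>\<infinity>y\<in>B x. f (x, y))"
  using assms
proof (induction G rule: finite_induct)
  case empty then show ?case by simp
next
  case (insert x G)
  have eq: "Sigma (insert x G) B = Pair x ` B x \<union> Sigma G B" by auto
  have disj: "Pair x ` B x \<inter> Sigma G B = {}" using insert by auto
  have "infsum f (Sigma (insert x G) B) = infsum f (Pair x ` B x) + infsum f (Sigma G B)"
    unfolding eq by (rule infsum_Un_disjoint[OF _ _ disj]) simp_all
  also have "infsum f (Pair x ` B x) = (\<Sum>\<^sub>\<infinity>y\<in>B x. f (x, y))"
    by (subst infsum_reindex) (auto simp: inj_on_def o_def)
  finally show ?case using insert by simp
qed

lemma ennreal_infsum_Sigma: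
  fixes f :: "'a \<times> 'b \<Rightarrow> ennreal"
  shows "infsum f (Sigma A B) = (\<Sum>\<^sub>\<infinity>x\<in>A. \<Sum>\<^sub>\<infinity>y\<in>B x. f (x, y))"
proof (rule antisym)
  show "infsum f (Sigma A B) \<le> (\<Sum>\<^sub>\<infinity>x\<in>A. \<Sum>\<^sub>\<infinity>y\<in>B x. f (x, y))"
  proof (rule infsum_le_finite_sums)
    fix F assume F: "finite F" "F \<subseteq> Sigma A B"
    have "sum f F \<le> infsum f (Sigma (fst ` F) B)"
      using F by (intro ennreal_sum_le_infsum) force+
    also have "\<dots> = (\<Sum>x\<in>fst ` F. \<Sum>\<^sub>\<infinity>y\<in>B x. f (x, y))"
      using F by (intro ennreal_infsum_Sigma_finite) auto
    also have "\<dots> \<le> (\<Sum>\<^sub>\<infinity>x\<in>A. \<Sum>\<^sub>\<infinity>y\<in>B x. f (x, y))"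
      using F by (intro ennreal_sum_le_infsum) auto
    finally show "sum f F \<le> (\<Sum>\<^sub>\<infinity>x\<in>A. \<Sum>\<^sub>\<infinity>y\<in>B x. f (x, y))" .
  qed simp
  show "(\<Sum>\<^sub>\<infinity>x\<in>A. \<Sum>\<^sub>\<infinity>y\<in>B x. f (x, y)) \<le> infsum f (Sigma A B)"
  proof (rule infsum_le_finite_sums)
    fix G assume G: "finite G" "G \<subseteq> A"
    then show "(\<Sum>x\<in>G. \<Sum>\<^sub>\<infinity>y\<in>B x. f (x, y)) \<le> infsum f (Sigma A B)"
      by (simp add: ennreal_infsum_Sigma_finite[symmetric] ennreal_infsum_mono_set Sigma_mono)
  qed simp
qed

lemma ennreal_infsum_UN:
  fixes f :: "'a \<Rightarrow> ennreal"
  assumes "disjoint_family_on B A"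
  shows "infsum f (\<Union>x\<in>A. B x) = (\<Sum>\<^sub>\<infinity>x\<in>A. infsum f (B x))"
proof -
  have eq: "(\<Union>x\<in>A. B x) = snd ` Sigma A B" by force
  have inj: "inj_on snd (Sigma A B)"
    using assms unfolding inj_on_def disjoint_family_on_def by force
  show ?thesis
    unfolding eq infsum_reindex[OF inj] by (simp add: ennreal_infsum_Sigma)
qed

lemma ennreal_infsum_nat_Suc:
  fixes a :: "nat \<Rightarrow> ennreal"
  shows "(\<Sum>\<^sub>\<infinity>m. a m) = a 0 + (\<Sum>\<^sub>\<infinity>m. a (Suc m))"
proof -
  have eq: "(UNIV :: nat set) = insert 0 (range Suc)" by (auto intro: nat.exhaust)
  have "(\<Sum>\<^sub>\<infinity>m. a m) = a 0 + infsum a (range Suc)"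
    by (subst eq) (rule infsum_insert, simp_all)
  also have "infsum a (range Suc) = infsum (a \<circ> Suc) UNIV" by (rule infsum_reindex) simp
  finally show ?thesis by (simp add: o_def)
qed

section \<open>Square-summable functions on a set\<close>

text \<open>The squared norm is also kept as an extended nonnegative real, which is always
  defined and additive over arbitrary disjoint decompositions.\<close>

definition square_summable :: "'a set \<Rightarrow> ('a \<Rightarrow> complex) \<Rightarrow> bool" where
  "square_summable C f \<longleftrightarrow> (\<lambda>a. (cmod (f a))\<^sup>2) summable_on C"

definition sqnorm :: "'a set \<Rightarrow> ('a \<Rightarrow> complex) \<Rightarrow> real" where
  "sqnorm C f = (\<Sum>\<^sub>\<infinity>a\<in>C. (cmod (f a))\<^sup>2)"

definition esqnorm :: "'a set \<Rightarrow> ('a \<Rightarrow> complex) \<Rightarrow> ennreal" where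
  "esqnorm C f = (\<Sum>\<^sub>\<infinity>a\<in>C. ennreal ((cmod (f a))\<^sup>2))"

definition inner_on :: "'a set \<Rightarrow> ('a \<Rightarrow> complex) \<Rightarrow> ('a \<Rightarrow> complex) \<Rightarrow> complex" where
  "inner_on C f g = (\<Sum>\<^sub>\<infinity>a\<in>C. f a * cnj (g a))"

lemma esqnorm_eq_sqnorm: "square_summable C f \<Longrightarrow> esqnorm C f = ennreal (sqnorm C f)"
  unfolding esqnorm_def square_summable_def sqnorm_def by (rule ennreal_infsum_of_real) auto

lemma square_summable_iff_esqnorm_finite: "square_summable C f \<longleftrightarrow> esqnorm C f < \<infinity>"
  using esqnorm_eq_sqnorm[of C f] summable_on_if_ennreal_infsum_finite[of C "\<lambda>a. (cmod (f a))\<^sup>2"]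
  by (auto simp: esqnorm_def square_summable_def)

lemma sqnorm_nonneg: "sqnorm C f \<ge> 0"
  unfolding sqnorm_def by (rule infsum_nonneg) auto

lemma sqnorm_eq_0_imp: "square_summable C f \<Longrightarrow> sqnorm C f = 0 \<Longrightarrow> a \<in> C \<Longrightarrow> f a = 0"
  unfolding sqnorm_def square_summable_def
  using nonneg_infsum_le_0D[of "\<lambda>a. (cmod (f a))\<^sup>2" C a] by auto

lemma sqnorm_scale: "sqnorm C (\<lambda>a. c * f a) = (cmod c)\<^sup>2 * sqnorm C f"
  unfolding sqnorm_def by (simp add: norm_mult power_mult_distrib infsum_cmult_right')

lemma square_summable_eqI: "square_summable C f \<Longrightarrow> (\<And>a. a \<in> C \<Longrightarrow> f a = g a) \<Longrightarrow> square_summable C g"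
  unfolding square_summable_def by (metis (mono_tags, lifting) summable_on_cong)

lemma sqnorm_cong: "(\<And>a. a \<in> C \<Longrightarrow> f a = g a) \<Longrightarrow> sqnorm C f = sqnorm C g"
  unfolding sqnorm_def by (intro infsum_cong) auto

lemma esqnorm_cong: "(\<And>a. a \<in> C \<Longrightarrow> f a = g a) \<Longrightarrow> esqnorm C f = esqnorm C g"
  unfolding esqnorm_def by (intro infsum_cong) auto

lemma inner_on_cong:
  "(\<And>a. a \<in> C \<Longrightarrow> f a = f' a) \<Longrightarrow> (\<And>a. a \<in> C \<Longrightarrow> g a = g' a) \<Longrightarrow> inner_on C f g = inner_on C f' g'"
  unfolding inner_on_def by (intro infsum_cong) auto

lemma square_summable_subset: "square_summable C f \<Longrightarrow> D \<subseteq> C \<Longrightarrow> square_summable D f"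
  unfolding square_summable_def by (rule summable_on_subset_banach)

lemma square_summable_unit_vec: "square_summable C (unit_vec w)"
  unfolding square_summable_def unit_vec_def
  by (rule finite_nonzero_values_imp_summable_on) (auto intro: finite_subset[of _ "{w}"])

lemma square_summable_lin:
  assumes "square_summable C f" "square_summable C g"
  shows "square_summable C (\<lambda>a. c * f a + g a)"
proof -
  have bound: "(cmod (x + y))\<^sup>2 \<le> 2 * (cmod x)\<^sup>2 + 2 * (cmod y)\<^sup>2" for x y :: complex
  proof -
    have "(cmod (x + y))\<^sup>2 \<le> (cmod x + cmod y)\<^sup>2"
      by (simp add: norm_triangle_ineq power_mono)
    also have "\<dots> \<le> 2 * (cmod x)\<^sup>2 + 2 * (cmod y)\<^sup>2"
      using zero_le_power2[of "cmod x - cmod y"] by (simp add: power2_eq_square algebra_simps)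
    finally show ?thesis .
  qed
  have "(\<lambda>a. (2 * (cmod c)\<^sup>2) * (cmod (f a))\<^sup>2 + 2 * (cmod (g a))\<^sup>2) summable_on C"
    using assms unfolding square_summable_def by (intro summable_on_cmult_right summable_on_add)
  moreover have "(cmod (c * f a + g a))\<^sup>2 \<le> (2 * (cmod c)\<^sup>2) * (cmod (f a))\<^sup>2 + 2 * (cmod (g a))\<^sup>2" for a
    using bound[of "c * f a" "g a"] by (simp add: norm_mult power_mult_distrib)
  ultimately show ?thesis unfolding square_summable_def
    by (rule summable_on_comparison_test) simp
qed

lemma square_summable_scale: "square_summable C f \<Longrightarrow> square_summable C (\<lambda>a. c * f a)"
  using square_summable_lin[of C f "\<lambda>_. 0" c] by (simp add: square_summable_def)

lemma summable_on_inner: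
  assumes "square_summable C f" "square_summable C g"
  shows "(\<lambda>a. f a * cnj (g a)) summable_on C"
proof (rule abs_summable_summable)
  have "(\<lambda>a. (1/2) * ((cmod (f a))\<^sup>2 + (cmod (g a))\<^sup>2)) summable_on C"
    using assms unfolding square_summable_def by (intro summable_on_cmult_right summable_on_add)
  moreover have "norm (f a * cnj (g a)) \<le> (1/2) * ((cmod (f a))\<^sup>2 + (cmod (g a))\<^sup>2)" for a
    using zero_le_power2[of "cmod (f a) - cmod (g a)"]
    by (simp add: norm_mult power2_eq_square algebra_simps)
  ultimately show "(\<lambda>a. norm (f a * cnj (g a))) summable_on C"
    by (rule summable_on_comparison_test) simp
qed

lemma inner_on_lin:
  assumes "square_summable C f" "square_summable C g" "square_summable C h"
  shows "inner_on C (\<lambda>a. c * f a + g a) h = c * inner_on C f h + inner_on C g h"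
proof -
  have "inner_on C (\<lambda>a. c * f a + g a) h = (\<Sum>\<^sub>\<infinity>a\<in>C. c * (f a * cnj (h a)) + g a * cnj (h a))"
    unfolding inner_on_def by (intro infsum_cong) (simp add: algebra_simps)
  also have "\<dots> = c * inner_on C f h + inner_on C g h"
    unfolding inner_on_def using assms
    by (simp add: infsum_add summable_on_cmult_right summable_on_inner infsum_cmult_right')
  finally show ?thesis .
qed

lemma inner_on_cnj: "inner_on C g f = cnj (inner_on C f g)"
  unfolding inner_on_def by (subst infsum_cnj[symmetric]) (simp add: mult.commute)

lemma inner_on_lin_right:
  assumes "square_summable C f" "square_summable C g" "square_summable C h"
  shows "inner_on C h (\<lambda>a. c * f a + g a) = cnj c * inner_on C h f + inner_on C h g"
  by (subst (1 2 3) inner_on_cnj) (simp add: inner_on_lin[OF assms])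

lemma inner_on_scale_left: "inner_on C (\<lambda>a. c * f a) g = c * inner_on C f g"
  unfolding inner_on_def by (simp add: mult.assoc infsum_cmult_right')

lemma inner_on_self: "square_summable C f \<Longrightarrow> inner_on C f f = complex_of_real (sqnorm C f)"
proof -
  assume f: "square_summable C f"
  have "inner_on C f f = (\<Sum>\<^sub>\<infinity>a\<in>C. complex_of_real ((cmod (f a))\<^sup>2))"
    unfolding inner_on_def by (intro infsum_cong) (rule complex_norm_square[symmetric])
  also have "\<dots> = complex_of_real (sqnorm C f)"
    using f unfolding sqnorm_def square_summable_def by (intro infsumI has_sum_of_real has_sum_infsum)
  finally show ?thesis .
qed

lemma inner_on_unit_vec: "w \<in> C \<Longrightarrow> inner_on C f (unit_vec w) = f w"
  unfolding inner_on_def unit_vec_def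
  by (subst infsum_cong_neutral[where T = "{w}"]) auto

lemma sqnorm_unit_vec: "w \<in> C \<Longrightarrow> sqnorm C (unit_vec w) = 1"
  unfolding sqnorm_def unit_vec_def
  by (subst infsum_cong_neutral[where T = "{w}" and g = "\<lambda>_. 1"]) auto

lemma sqnorm_add_scaled:
  assumes f: "square_summable C f" and g: "square_summable C g"
  shows "sqnorm C (\<lambda>a. f a + c * g a) = sqnorm C f + 2 * Re (cnj c * inner_on C f g) + (cmod c)\<^sup>2 * sqnorm C g"
proof -
  have expand: "(cmod (x + c * y))\<^sup>2 = (cmod x)\<^sup>2 + 2 * Re (cnj c * (x * cnj y)) + (cmod c)\<^sup>2 * (cmod y)\<^sup>2"
    for x y
    unfolding cmod_power2 by (simp add: power2_eq_square algebra_simps)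
  have s: "(\<lambda>a. cnj c * (f a * cnj (g a))) summable_on C"
    using f g by (intro summable_on_cmult_right summable_on_inner)
  have "(\<Sum>\<^sub>\<infinity>a\<in>C. 2 * Re (cnj c * (f a * cnj (g a)))) = 2 * (\<Sum>\<^sub>\<infinity>a\<in>C. Re (cnj c * (f a * cnj (g a))))"
    by (rule infsum_cmult_right')
  also have "\<dots> = 2 * Re (\<Sum>\<^sub>\<infinity>a\<in>C. cnj c * (f a * cnj (g a)))"
    using infsum_Re[OF s] by simp
  also have "\<dots> = 2 * Re (cnj c * inner_on C f g)"
    unfolding inner_on_def by (simp only: infsum_cmult_right')
  finally have mid: "(\<Sum>\<^sub>\<infinity>a\<in>C. 2 * Re (cnj c * (f a * cnj (g a)))) = 2 * Re (cnj c * inner_on C f g)" .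
  have s1: "(\<lambda>a. (cmod (f a))\<^sup>2) summable_on C" using f by (simp add: square_summable_def)
  have s2: "(\<lambda>a. 2 * Re (cnj c * (f a * cnj (g a)))) summable_on C"
    using summable_on_Re[OF s] by (rule summable_on_cmult_right)
  have s3: "(\<lambda>a. (cmod c)\<^sup>2 * (cmod (g a))\<^sup>2) summable_on C"
    using g by (intro summable_on_cmult_right) (simp add: square_summable_def)
  have "sqnorm C (\<lambda>a. f a + c * g a) = (\<Sum>\<^sub>\<infinity>a\<in>C. (cmod (f a))\<^sup>2)
      + (\<Sum>\<^sub>\<infinity>a\<in>C. 2 * Re (cnj c * (f a * cnj (g a)))) + (\<Sum>\<^sub>\<infinity>a\<in>C. (cmod c)\<^sup>2 * (cmod (g a))\<^sup>2)"
    unfolding sqnorm_def expand using s1 s2 s3 by (simp add: infsum_add summable_on_add)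
  also have "\<dots> = sqnorm C f + 2 * Re (cnj c * inner_on C f g) + (cmod c)\<^sup>2 * sqnorm C g"
    unfolding mid sqnorm_def by (simp only: infsum_cmult_right')
  finally show ?thesis .
qed

lemma sqnorm_remove:
  assumes w: "w \<in> C" and f: "square_summable C f"
  shows "sqnorm C f = (cmod (f w))\<^sup>2 + sqnorm (C - {w}) f"
proof -
  have "sqnorm C f = sqnorm (insert w (C - {w})) f" using w by (simp add: insert_absorb)
  also have "\<dots> = (cmod (f w))\<^sup>2 + sqnorm (C - {w}) f"
    unfolding sqnorm_def
    by (rule infsum_insert) (use square_summable_subset[OF f, of "C - {w}"] in \<open>auto simp: square_summable_def\<close>)
  finally show ?thesis .
qed

lemma esqnorm_remove:
  assumes w: "w \<in> C"
  shows "esqnorm C f = ennreal ((cmod (f w))\<^sup>2) + esqnorm (C - {w}) f"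
proof -
  have "esqnorm C f = esqnorm (insert w (C - {w})) f" using w by (simp add: insert_absorb)
  also have "\<dots> = ennreal ((cmod (f w))\<^sup>2) + esqnorm (C - {w}) f"
    unfolding esqnorm_def by (rule infsum_insert) auto
  finally show ?thesis .
qed

lemma sqnorm_parallelogram:
  assumes "square_summable C f" "square_summable C g"
  shows "sqnorm C (\<lambda>a. f a + 1 * g a) + sqnorm C (\<lambda>a. f a + (-1) * g a) = 2 * sqnorm C f + 2 * sqnorm C g"
  using sqnorm_add_scaled[OF assms, of 1] sqnorm_add_scaled[OF assms, of "-1"] by simp

lemma inner_on_eq_if_sqnorm_eq:
  assumes f: "square_summable A f" and g: "square_summable A g"
    and f': "square_summable B f'" and g': "square_summable B g'"
    and eq: "\<And>c. sqnorm B (\<lambda>b. f' b + c * g' b) = sqnorm A (\<lambda>a. f a + c * g a)"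
  shows "inner_on B f' g' = inner_on A f g"
proof -
  have "sqnorm B f' = sqnorm A f" using eq[of 0] by simp
  moreover have "sqnorm B g' = sqnorm A g"
    using sqnorm_parallelogram[OF f g] sqnorm_parallelogram[OF f' g'] eq[of 1] eq[of "-1"] calculation
    by linarith
  ultimately have key: "Re (cnj c * inner_on B f' g') = Re (cnj c * inner_on A f g)" for c
    using eq[of c] sqnorm_add_scaled[OF f g, of c] sqnorm_add_scaled[OF f' g', of c] by simp
  have "Re (inner_on B f' g') = Re (inner_on A f g)" using key[of 1] by simp
  moreover have "Im (inner_on B f' g') = Im (inner_on A f g)" using key[of \<i>] by simp
  ultimately show ?thesis by (rule complex_eqI)
qed

lemma mem_l2_iff: "F \<in> l2 A \<longleftrightarrow> (\<forall>p. p \<notin> A \<longrightarrow> F p = 0) \<and> square_summable A F"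
  by (simp add: l2_def square_summable_def)

lemma l2_UNIV_iff: "f \<in> l2 UNIV \<longleftrightarrow> square_summable UNIV f"
  by (simp add: mem_l2_iff)

lemma l2_norm_eq: "l2_norm f = sqrt (sqnorm UNIV f)"
  by (simp add: l2_norm_def sqnorm_def)

lemma l2_inner_eq: "l2_inner f g = inner_on UNIV f g"
  by (simp add: l2_inner_def inner_on_def)

section \<open>A unitary moving a unit vector to a basis vector\<close>

definition reflection :: "'a set \<Rightarrow> ('a \<Rightarrow> complex) \<Rightarrow> ('a \<Rightarrow> complex) \<Rightarrow> 'a \<Rightarrow> complex" where
  "reflection C v g = (if sqnorm C v = 0 then g
     else (\<lambda>a. g a - (2 * inner_on C g v / complex_of_real (sqnorm C v)) * v a))"

lemma reflection_cong:
  "(\<And>a. a \<in> C \<Longrightarrow> f a = g a) \<Longrightarrow> f b = g b \<Longrightarrow> reflection C v f b = reflection C v g b"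
  unfolding reflection_def using inner_on_cong[of C f g v v] by simp

context
  fixes C :: "'a set" and v :: "'a \<Rightarrow> complex"
  assumes v: "square_summable C v"
begin

lemma square_summable_reflection: "square_summable C g \<Longrightarrow> square_summable C (reflection C v g)"
  unfolding reflection_def
  using square_summable_lin[OF v, of g "- (2 * inner_on C g v / complex_of_real (sqnorm C v))"]
  by simp

lemma sqnorm_reflection:
  assumes g: "square_summable C g"
  shows "sqnorm C (reflection C v g) = sqnorm C g"
proof (cases "sqnorm C v = 0")
  case True then show ?thesis by (simp add: reflection_def)
next
  case False
  define z where "z = inner_on C g v"
  define c where "c = - (2 * z / complex_of_real (sqnorm C v))"
  have pos: "sqnorm C v > 0" using False sqnorm_nonneg[of C v] by simp
  have "cnj z * z = complex_of_real ((cmod z)\<^sup>2)"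
    by (metis complex_norm_square mult.commute)
  then have "cnj c * z = - complex_of_real (2 * (cmod z)\<^sup>2 / sqnorm C v)"
    unfolding c_def by simp
  moreover have "(cmod c)\<^sup>2 * sqnorm C v = 4 * (cmod z)\<^sup>2 / sqnorm C v"
    using pos unfolding c_def by (simp add: norm_divide norm_mult power2_eq_square field_simps)
  ultimately have cancel: "2 * Re (cnj c * z) + (cmod c)\<^sup>2 * sqnorm C v = 0" by simp
  have "sqnorm C (reflection C v g) = sqnorm C (\<lambda>a. g a + c * v a)"
    unfolding reflection_def c_def z_def using False by (intro sqnorm_cong) simp
  also have "\<dots> = sqnorm C g"
    using cancel unfolding sqnorm_add_scaled[OF g v] z_def by simp
  finally show ?thesis .
qed

lemma inner_on_reflection_axis:
  assumes g: "square_summable C g" and nz: "sqnorm C v \<noteq> 0"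
  shows "inner_on C (reflection C v g) v = - inner_on C g v"
proof -
  have "inner_on C (reflection C v g) v
      = inner_on C (\<lambda>a. (- (2 * inner_on C g v / complex_of_real (sqnorm C v))) * v a + g a) v"
    unfolding reflection_def using nz by (intro inner_on_cong) auto
  also have "\<dots> = (- (2 * inner_on C g v / complex_of_real (sqnorm C v))) * inner_on C v v + inner_on C g v"
    by (rule inner_on_lin[OF v g v])
  also have "\<dots> = - inner_on C g v"
    using nz by (simp add: inner_on_self[OF v])
  finally show ?thesis .
qed

lemma reflection_reflection:
  assumes g: "square_summable C g"
  shows "reflection C v (reflection C v g) = g"
proof (cases "sqnorm C v = 0")
  case True then show ?thesis by (simp add: reflection_def)
next
  case False
  show ?thesis
    using False unfolding reflection_def[of C v "reflection C v g"] inner_on_reflection_axis[OF g False]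
    by (simp add: reflection_def)
qed

lemma reflection_lin:
  assumes "square_summable C f" "square_summable C g"
  shows "reflection C v (\<lambda>a. c * f a + g a) b = c * reflection C v f b + reflection C v g b"
  using assms unfolding reflection_def
  by (simp add: inner_on_lin[OF assms v] ring_distribs add_divide_distrib)

end

definition phase :: "complex \<Rightarrow> complex" where
  "phase z = (if z = 0 then 1 else z / complex_of_real (cmod z))"

lemma norm_phase: "cmod (phase z) = 1"
  unfolding phase_def by (auto simp: norm_divide)

lemma cnj_phase_mult_phase: "cnj (phase z) * phase z = 1"
  using complex_norm_square[of "phase z"] norm_phase[of z] by (simp add: mult.commute)

lemma cnj_phase_mult: "cnj (phase z) * z = complex_of_real (cmod z)"
proof (cases "z = 0")
  case False
  have "cnj z * z = complex_of_real ((cmod z)\<^sup>2)"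
    by (metis complex_norm_square mult.commute)
  then show ?thesis using False by (simp add: phase_def power2_eq_square field_simps)
qed (simp add: phase_def)

text \<open>The rotation below reflects the phase-adjusted vector s onto the basis vector at
  w and then undoes the phase; for a unit vector s it is a unitary sending s to that
  basis vector, so its value at w is the coefficient of g along s.\<close>

definition pivot_axis :: "('a \<Rightarrow> complex) \<Rightarrow> 'a \<Rightarrow> 'a \<Rightarrow> complex" where
  "pivot_axis s w = (\<lambda>a. cnj (phase (s w)) * s a - unit_vec w a)"

definition pivot_rotation ::
  "'a set \<Rightarrow> ('a \<Rightarrow> complex) \<Rightarrow> 'a \<Rightarrow> ('a \<Rightarrow> complex) \<Rightarrow> 'a \<Rightarrow> complex" where
  "pivot_rotation C s w g = (\<lambda>a. cnj (phase (s w)) * reflection C (pivot_axis s w) g a)"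

definition pivot_rotation_inv ::
  "'a set \<Rightarrow> ('a \<Rightarrow> complex) \<Rightarrow> 'a \<Rightarrow> ('a \<Rightarrow> complex) \<Rightarrow> 'a \<Rightarrow> complex" where
  "pivot_rotation_inv C s w h = reflection C (pivot_axis s w) (\<lambda>a. phase (s w) * h a)"

lemma pivot_rotation_cong:
  "(\<And>a. a \<in> C \<Longrightarrow> f a = g a) \<Longrightarrow> b \<in> C \<Longrightarrow> pivot_rotation C s w f b = pivot_rotation C s w g b"
  unfolding pivot_rotation_def using reflection_cong by metis

locale pointed_unit_vector =
  fixes C :: "'a set" and s :: "'a \<Rightarrow> complex" and w :: 'a
  assumes pivot_in: "w \<in> C" and square_summable_vec: "square_summable C s" and sqnorm_vec: "sqnorm C s = 1"
begin

abbreviation "\<theta> \<equiv> phase (s w)"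
abbreviation "v \<equiv> pivot_axis s w"

lemma square_summable_axis: "square_summable C v"
proof -
  have "square_summable C (\<lambda>a. (-1) * unit_vec w a + cnj \<theta> * s a)"
    by (intro square_summable_lin square_summable_unit_vec square_summable_scale square_summable_vec)
  then show ?thesis by (rule square_summable_eqI) (simp add: pivot_axis_def)
qed

lemma square_summable_phased: "square_summable C (\<lambda>a. cnj \<theta> * s a)"
  by (rule square_summable_scale[OF square_summable_vec])

lemma sqnorm_axis: "sqnorm C v = 2 - 2 * cmod (s w)"
proof -
  have "sqnorm C v = sqnorm C (\<lambda>a. cnj \<theta> * s a + (-1) * unit_vec w a)"
    unfolding pivot_axis_def by (intro sqnorm_cong) simp
  also have "\<dots> = sqnorm C (\<lambda>a. cnj \<theta> * s a) + 2 * Re (cnj (-1) * inner_on C (\<lambda>a. cnj \<theta> * s a) (unit_vec w))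
      + (cmod (-1))\<^sup>2 * sqnorm C (unit_vec w)"
    by (rule sqnorm_add_scaled[OF square_summable_phased square_summable_unit_vec])
  also have "\<dots> = 2 - 2 * cmod (s w)"
    using pivot_in sqnorm_vec
    by (simp add: inner_on_unit_vec cnj_phase_mult sqnorm_unit_vec sqnorm_scale norm_phase)
  finally show ?thesis .
qed

lemma reflection_axis_at_pivot:
  assumes g: "square_summable C g"
  shows "reflection C v g w = inner_on C g (\<lambda>a. cnj \<theta> * s a)"
proof (cases "sqnorm C v = 0")
  case True
  have "\<And>a. a \<in> C \<Longrightarrow> v a = 0" using sqnorm_eq_0_imp[OF square_summable_axis True] .
  then have "inner_on C g (\<lambda>a. cnj \<theta> * s a) = inner_on C g (unit_vec w)"
    by (intro inner_on_cong) (auto simp: pivot_axis_def)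
  then show ?thesis using True pivot_in by (simp add: reflection_def inner_on_unit_vec)
next
  case False
  have "inner_on C g v = inner_on C g (\<lambda>a. (-1) * unit_vec w a + cnj \<theta> * s a)"
    unfolding pivot_axis_def by (intro inner_on_cong) auto
  also have "\<dots> = cnj (-1) * inner_on C g (unit_vec w) + inner_on C g (\<lambda>a. cnj \<theta> * s a)"
    by (rule inner_on_lin_right[OF square_summable_unit_vec square_summable_phased g])
  finally have gv: "inner_on C g v = inner_on C g (\<lambda>a. cnj \<theta> * s a) - g w"
    using pivot_in by (simp add: inner_on_unit_vec)
  have vw: "v w = complex_of_real (cmod (s w)) - 1"
    by (simp add: pivot_axis_def cnj_phase_mult unit_vec_def)
  have "reflection C v g w = g w - (2 * inner_on C g v / complex_of_real (sqnorm C v)) * v w"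
    using False by (simp add: reflection_def)
  also have "\<dots> = g w + inner_on C g v"
    using False unfolding vw sqnorm_axis by (simp add: field_simps)
  finally show ?thesis unfolding gv by simp
qed

lemma square_summable_pivot_rotation: "square_summable C g \<Longrightarrow> square_summable C (pivot_rotation C s w g)"
  unfolding pivot_rotation_def
  by (intro square_summable_scale square_summable_reflection[OF square_summable_axis])

lemma sqnorm_pivot_rotation: "square_summable C g \<Longrightarrow> sqnorm C (pivot_rotation C s w g) = sqnorm C g"
  unfolding pivot_rotation_def
  by (simp add: sqnorm_scale norm_phase sqnorm_reflection[OF square_summable_axis])

lemma pivot_rotation_at_pivot: "square_summable C g \<Longrightarrow> pivot_rotation C s w g w = inner_on C g s"
  unfolding pivot_rotation_def reflection_axis_at_pivot inner_on_cnj[of C g]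
  by (simp add: inner_on_scale_left inner_on_cnj[of C s g] mult.assoc[symmetric] cnj_phase_mult_phase
      flip: complex_cnj_mult)

lemma pivot_rotation_lin:
  "square_summable C f \<Longrightarrow> square_summable C g \<Longrightarrow>
    pivot_rotation C s w (\<lambda>a. c * f a + g a) b = c * pivot_rotation C s w f b + pivot_rotation C s w g b"
  unfolding pivot_rotation_def by (subst reflection_lin[OF square_summable_axis]) (simp_all add: algebra_simps)

lemma pivot_rotation_scale:
  "square_summable C f \<Longrightarrow> pivot_rotation C s w (\<lambda>a. c * f a) b = c * pivot_rotation C s w f b"
  using pivot_rotation_lin[of f "\<lambda>_. 0" c b]
  by (simp add: pivot_rotation_def reflection_def inner_on_def square_summable_def)

lemma square_summable_pivot_rotation_inv:
  "square_summable C h \<Longrightarrow> square_summable C (pivot_rotation_inv C s w h)"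
  unfolding pivot_rotation_inv_def
  by (intro square_summable_reflection[OF square_summable_axis] square_summable_scale)

lemma sqnorm_pivot_rotation_inv:
  "square_summable C h \<Longrightarrow> sqnorm C (pivot_rotation_inv C s w h) = sqnorm C h"
  unfolding pivot_rotation_inv_def
  by (simp add: sqnorm_reflection[OF square_summable_axis] square_summable_scale sqnorm_scale norm_phase)

lemma pivot_rotation_pivot_rotation_inv:
  "square_summable C h \<Longrightarrow> pivot_rotation C s w (pivot_rotation_inv C s w h) a = h a"
  unfolding pivot_rotation_def pivot_rotation_inv_def
  by (simp add: reflection_reflection[OF square_summable_axis] square_summable_scale
      mult.assoc[symmetric] cnj_phase_mult_phase)

lemma pivot_rotation_self: "a \<in> C \<Longrightarrow> a \<noteq> w \<Longrightarrow> pivot_rotation C s w s a = 0"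
proof -
  assume a: "a \<in> C" "a \<noteq> w"
  have "sqnorm C (pivot_rotation C s w s) = 1"
    using sqnorm_pivot_rotation[OF square_summable_vec] sqnorm_vec by simp
  moreover have "pivot_rotation C s w s w = 1"
    using pivot_rotation_at_pivot[OF square_summable_vec] inner_on_self[OF square_summable_vec] sqnorm_vec by simp
  ultimately have "sqnorm (C - {w}) (pivot_rotation C s w s) = 0"
    using sqnorm_remove[OF pivot_in square_summable_pivot_rotation[OF square_summable_vec]] by simp
  then show ?thesis
    using sqnorm_eq_0_imp[OF square_summable_subset[OF square_summable_pivot_rotation[OF square_summable_vec]],
        of "C - {w}" a] a
    by auto
qed

lemma sqnorm_split_pivot_rotation:
  "square_summable C g \<Longrightarrow> sqnorm C g = (cmod (inner_on C g s))\<^sup>2 + sqnorm (C - {w}) (pivot_rotation C s w g)"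
  using sqnorm_remove[OF pivot_in square_summable_pivot_rotation, of g] sqnorm_pivot_rotation[of g]
    pivot_rotation_at_pivot[of g]
  by simp

end

section \<open>The parameters xi_n(x)\<close>

lemma xi_squared:
  assumes "x \<ge> 1"
  shows "(xi n x)\<^sup>2 = (1 + real (n + 1) * (x\<^sup>2 - 1)) / (1 + real n * (x\<^sup>2 - 1))"
proof -
  have "x\<^sup>2 \<ge> 1" using assms by (simp add: one_le_power)
  then show ?thesis unfolding xi_def by (simp add: real_sqrt_pow2 zero_le_divide_iff)
qed

text \<open>The parameters are a semigroup orbit: the weights of S_[xi_k(x)] are the weights
  of S_[x] from the k-th one on.\<close>

lemma xi_xi:
  assumes x: "x \<ge> 1"
  shows "xi m (xi k x) = xi (k + m) x"
proof -
  define t where "t = x\<^sup>2 - 1"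
  have t: "t \<ge> 0" using x by (simp add: t_def one_le_power)
  have D: "1 + real n * t > 0" for n using t by (simp add: add_pos_nonneg)
  have q: "(xi k x)\<^sup>2 - 1 = t / (1 + real k * t)"
    using D[of k] unfolding xi_squared[OF x] t_def[symmetric] by (simp add: field_simps)
  have num: "1 + real (m + 1) * ((xi k x)\<^sup>2 - 1) = (1 + real (k + m + 1) * t) / (1 + real k * t)"
    unfolding q using D[of k] by (simp add: field_simps)
  have den: "1 + real m * ((xi k x)\<^sup>2 - 1) = (1 + real (k + m) * t) / (1 + real k * t)"
    unfolding q using D[of k] by (simp add: field_simps)
  have "(1 + real (m + 1) * ((xi k x)\<^sup>2 - 1)) / (1 + real m * ((xi k x)\<^sup>2 - 1))
      = (1 + real (k + m + 1) * t) / (1 + real (k + m) * t)"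
    unfolding num den using D[of k] by simp
  then show ?thesis unfolding xi_def[of m] xi_def[of "k + m"] t_def by simp
qed

section \<open>Rooted trees\<close>

locale rooted =
  fixes par :: "'v \<Rightarrow> 'v" and rt :: 'v
  assumes tree: "rooted_tree par rt"
begin

abbreviation "Chi \<equiv> children par rt"

definition depth :: "'v \<Rightarrow> nat" where
  "depth v = (LEAST n. (par ^^ n) v = rt)"

lemma depth_root: "depth rt = 0"
  unfolding depth_def by (rule Least_eq_0) simp

lemma depth_par:
  assumes "v \<noteq> rt"
  shows "depth v = Suc (depth (par v))"
proof -
  have reach: "(par ^^ depth v) v = rt" for v
    unfolding depth_def by (rule LeastI_ex) (use tree in \<open>simp add: rooted_tree_def\<close>)
  have least: "(par ^^ n) v = rt \<Longrightarrow> depth v \<le> n" for n v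
    unfolding depth_def by (rule Least_le)
  obtain n where n: "depth v = Suc n"
    using assms reach[of v] by (cases "depth v") auto
  have "depth v \<le> Suc (depth (par v))"
    using reach[of "par v"] by (intro least) (simp only: funpow_Suc_right comp_def)
  moreover have "depth (par v) \<le> n"
    using reach[of v] n by (intro least) (simp only: funpow_Suc_right comp_def)
  ultimately show ?thesis using n by simp
qed

lemma mem_children_iff: "c \<in> Chi u \<longleftrightarrow> c \<noteq> rt \<and> par c = u"
  by (simp add: children_def)

lemma depth_child: "c \<in> Chi u \<Longrightarrow> depth c = Suc (depth u)"
  using depth_par mem_children_iff by auto

lemma depth_eq_0_iff: "depth v = 0 \<longleftrightarrow> v = rt"
  using depth_par depth_root by (cases "v = rt") auto

lemma disjoint_family_children: "disjoint_family_on Chi Y"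
  unfolding disjoint_family_on_def by (auto simp: mem_children_iff)

lemma depth_le_Suc_eq: "{v. depth v \<le> Suc K} = insert rt (\<Union>u\<in>{u. depth u \<le> K}. Chi u)"
proof (intro set_eqI iffI)
  fix v assume "v \<in> {v. depth v \<le> Suc K}"
  then show "v \<in> insert rt (\<Union>u\<in>{u. depth u \<le> K}. Chi u)"
    using depth_par[of v] by (cases "v = rt") (auto simp: mem_children_iff)
next
  fix v assume "v \<in> insert rt (\<Union>u\<in>{u. depth u \<le> K}. Chi u)"
  then show "v \<in> {v. depth v \<le> Suc K}"
    using depth_root depth_child by auto
qed

lemma generation_eq: "generation par rt n = {u. depth u = n}"
proof (induction n)
  case 0 then show ?case using depth_eq_0_iff by auto
next
  case (Suc n)
  show ?case
  proof (intro set_eqI iffI)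
    fix v assume "v \<in> generation par rt (Suc n)"
    then show "v \<in> {u. depth u = Suc n}" using Suc depth_child by auto
  next
    fix v assume v: "v \<in> {u. depth u = Suc n}"
    then have "v \<noteq> rt" using depth_root by auto
    then have "v \<in> Chi (par v)" "depth (par v) = n" using depth_par[of v] v by (auto simp: mem_children_iff)
    then show "v \<in> generation par rt (Suc n)" using Suc by auto
  qed
qed

lemma esqnorm_insert_root_children:
  "esqnorm (insert rt (\<Union>u\<in>Y. Chi u)) f = ennreal ((cmod (f rt))\<^sup>2) + (\<Sum>\<^sub>\<infinity>u\<in>Y. esqnorm (Chi u) f)"
proof -
  have "esqnorm (insert rt (\<Union>u\<in>Y. Chi u)) f = ennreal ((cmod (f rt))\<^sup>2) + esqnorm (\<Union>u\<in>Y. Chi u) f"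
    unfolding esqnorm_def by (rule infsum_insert) (auto simp: mem_children_iff)
  also have "esqnorm (\<Union>u\<in>Y. Chi u) f = (\<Sum>\<^sub>\<infinity>u\<in>Y. esqnorm (Chi u) f)"
    unfolding esqnorm_def by (rule ennreal_infsum_UN[OF disjoint_family_children])
  finally show ?thesis .
qed

lemma esqnorm_UNIV_eq: "esqnorm UNIV f = ennreal ((cmod (f rt))\<^sup>2) + (\<Sum>\<^sub>\<infinity>u. esqnorm (Chi u) f)"
proof -
  have "UNIV = insert rt (\<Union>u. Chi u)" by (auto simp: mem_children_iff)
  then show ?thesis using esqnorm_insert_root_children[of UNIV f] by simp
qed

end

section \<open>Weighted shifts on trees\<close>

locale two_isometric_tree_shift = rooted par rt
  for par :: "'v \<Rightarrow> 'v" and rt :: 'v +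
  fixes lam :: "'v \<Rightarrow> complex" and \<alpha> :: "'v \<Rightarrow> real"
  assumes bounded: "bounded_on_l2 UNIV (tree_shift par rt lam)"
    and two_isometric: "two_isometry UNIV (tree_shift par rt lam)"
    and norm_shift_unit_vec: "\<And>u. u \<noteq> rt \<Longrightarrow> l2_norm (tree_shift par rt lam (unit_vec u)) = \<alpha> (par u)"
begin

abbreviation "S \<equiv> tree_shift par rt lam"

lemma shift_root: "S f rt = 0"
  by (simp add: tree_shift_def)

lemma shift_child: "c \<in> Chi u \<Longrightarrow> S f c = lam c * f u"
  by (simp add: tree_shift_def mem_children_iff)

lemma shift_unit_vec: "S (unit_vec u) v = (if v \<in> Chi u then lam v else 0)"
  by (auto simp: tree_shift_def unit_vec_def mem_children_iff)

lemma square_summable_shift: "square_summable UNIV f \<Longrightarrow> square_summable UNIV (S f)"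
  using bounded unfolding bounded_on_l2_def by (simp add: l2_UNIV_iff[symmetric])

lemma square_summable_weights: "square_summable (Chi u) lam"
proof -
  have "square_summable (Chi u) (S (unit_vec u))"
    using square_summable_shift[OF square_summable_unit_vec] by (rule square_summable_subset) simp
  then show ?thesis by (rule square_summable_eqI) (simp add: shift_unit_vec)
qed

definition shift_sqnorm :: "'v \<Rightarrow> real" where
  "shift_sqnorm u = sqnorm (Chi u) lam"

lemma shift_sqnorm_nonneg: "shift_sqnorm u \<ge> 0"
  unfolding shift_sqnorm_def by (rule sqnorm_nonneg)

lemma sqnorm_shift_unit_vec: "sqnorm UNIV (S (unit_vec u)) = shift_sqnorm u"
  unfolding sqnorm_def shift_sqnorm_def by (rule infsum_cong_neutral) (auto simp: shift_unit_vec)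

lemma esqnorm_shift: "esqnorm UNIV (S g) = (\<Sum>\<^sub>\<infinity>u. ennreal ((cmod (g u))\<^sup>2 * shift_sqnorm u))"
proof -
  have "esqnorm (Chi u) (S g) = ennreal ((cmod (g u))\<^sup>2 * shift_sqnorm u)" for u
  proof -
    have "esqnorm (Chi u) (S g) = esqnorm (Chi u) (\<lambda>c. g u * lam c)"
      by (rule esqnorm_cong) (simp add: shift_child mult.commute)
    also have "\<dots> = ennreal ((cmod (g u))\<^sup>2 * shift_sqnorm u)"
      using square_summable_scale[OF square_summable_weights]
      by (simp add: esqnorm_eq_sqnorm sqnorm_scale shift_sqnorm_def)
    finally show ?thesis .
  qed
  then show ?thesis unfolding esqnorm_UNIV_eq by (simp add: shift_root)
qed

lemma shift_sqnorm_child: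
  assumes "c \<in> Chi u"
  shows "shift_sqnorm c = (\<alpha> u)\<^sup>2"
proof -
  have "sqrt (shift_sqnorm c) = \<alpha> u"
    using assms norm_shift_unit_vec[of c] by (simp add: mem_children_iff l2_norm_eq sqnorm_shift_unit_vec)
  then show ?thesis using shift_sqnorm_nonneg[of c] by (metis real_sqrt_pow2)
qed

lemma sqnorm_shift_shift_unit_vec: "sqnorm UNIV (S (S (unit_vec u))) = (\<alpha> u)\<^sup>2 * shift_sqnorm u"
proof -
  have "ennreal (sqnorm UNIV (S (S (unit_vec u)))) = esqnorm UNIV (S (S (unit_vec u)))"
    by (intro esqnorm_eq_sqnorm[symmetric] square_summable_shift square_summable_unit_vec)
  also have "\<dots> = (\<Sum>\<^sub>\<infinity>w. ennreal ((cmod (complex_of_real (\<alpha> u) * S (unit_vec u) w))\<^sup>2))"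
    unfolding esqnorm_shift
    by (intro infsum_cong) (auto simp: shift_unit_vec shift_sqnorm_child norm_mult power_mult_distrib mult.commute)
  also have "\<dots> = ennreal ((\<alpha> u)\<^sup>2 * shift_sqnorm u)"
    using square_summable_scale[OF square_summable_shift[OF square_summable_unit_vec]]
    by (simp flip: esqnorm_def add: esqnorm_eq_sqnorm sqnorm_scale sqnorm_shift_unit_vec)
  finally show ?thesis
    by (simp add: ennreal_inj sqnorm_nonneg shift_sqnorm_nonneg)
qed

lemma two_isometry_unit_vec: "1 - 2 * shift_sqnorm u + (\<alpha> u)\<^sup>2 * shift_sqnorm u = 0"
proof -
  have e: "square_summable UNIV (unit_vec u)" by (rule square_summable_unit_vec)
  then have "unit_vec u \<in> l2 UNIV" by (simp add: l2_UNIV_iff)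
  then have "l2_inner (unit_vec u) (unit_vec u) - 2 * l2_inner (S (unit_vec u)) (S (unit_vec u))
        + l2_inner (S (S (unit_vec u))) (S (S (unit_vec u))) = 0"
    using two_isometric unfolding two_isometry_def by blast
  then have "complex_of_real (1 - 2 * shift_sqnorm u + (\<alpha> u)\<^sup>2 * shift_sqnorm u) = 0"
    unfolding l2_inner_eq
    by (simp add: inner_on_self e square_summable_shift sqnorm_unit_vec sqnorm_shift_unit_vec
        sqnorm_shift_shift_unit_vec)
  then show ?thesis by (simp only: of_real_eq_0_iff)
qed

lemma shift_sqnorm_pos: "shift_sqnorm u > 0"
proof -
  have "shift_sqnorm u \<noteq> 0" using two_isometry_unit_vec[of u] by auto
  then show ?thesis using shift_sqnorm_nonneg[of u] by simp
qed

lemma children_nonempty: "Chi u \<noteq> {}"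
  using shift_sqnorm_pos[of u] by (auto simp: shift_sqnorm_def sqnorm_def)

lemma leafless: "leafless par rt"
  unfolding leafless_def using children_nonempty by blast

lemma shift_sqnorm_recurrence: "c \<in> Chi u \<Longrightarrow> shift_sqnorm c * shift_sqnorm u = 2 * shift_sqnorm u - 1"
  using two_isometry_unit_vec[of u] shift_sqnorm_child[of c u] by simp

lemma ex_depth_eq: "\<exists>u. depth u = n"
proof (induction n)
  case 0 then show ?case using depth_root by blast
next
  case (Suc n)
  then obtain u where "depth u = n" by blast
  moreover obtain c where "c \<in> Chi u" using children_nonempty[of u] by blast
  ultimately show ?case using depth_child by blast
qed

text \<open>With t = ||S e_rt||^2 - 1 the recurrence becomes t_c = t_u / (1 + t_u), solved by
  ||S e_u||^2 = (1 + (n+1) t) / (1 + n t) at depth n; positivity of all these forces t \<ge> 0.\<close>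

lemma shift_sqnorm_closed_form:
  defines "t \<equiv> shift_sqnorm rt - 1"
  shows "1 + real n * t > 0 \<and> (\<forall>u. depth u = n \<longrightarrow> shift_sqnorm u = (1 + real (n + 1) * t) / (1 + real n * t))"
proof (induction n)
  case 0
  then show ?case by (auto simp: depth_eq_0_iff t_def)
next
  case (Suc n)
  then have D: "1 + real n * t > 0" and IH: "\<And>u. depth u = n \<Longrightarrow> shift_sqnorm u = (1 + real (n + 1) * t) / (1 + real n * t)"
    by auto
  obtain u0 where "depth u0 = n" using ex_depth_eq by blast
  then have D': "1 + real (n + 1) * t > 0"
    using IH shift_sqnorm_pos[of u0] D by (simp add: zero_less_divide_iff)
  have "shift_sqnorm v = (1 + real (Suc n + 1) * t) / (1 + real (Suc n) * t)" if v: "depth v = Suc n" for v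
  proof -
    have "v \<noteq> rt" using v depth_root by auto
    then have "v \<in> Chi (par v)" and "depth (par v) = n"
      using depth_par[of v] v by (auto simp: mem_children_iff)
    then have "shift_sqnorm v * ((1 + real (n + 1) * t) / (1 + real n * t))
        = 2 * ((1 + real (n + 1) * t) / (1 + real n * t)) - 1"
      using shift_sqnorm_recurrence[OF \<open>v \<in> Chi (par v)\<close>] IH[OF \<open>depth (par v) = n\<close>] by simp
    then show ?thesis using D D' by (simp add: field_simps)
  qed
  then show ?case using D' by simp
qed

definition root_norm :: real where
  "root_norm = l2_norm (S (unit_vec rt))"

lemma root_norm_squared: "root_norm\<^sup>2 = shift_sqnorm rt"
  unfolding root_norm_def l2_norm_eq sqnorm_shift_unit_vec using shift_sqnorm_nonneg by simp

lemma root_norm_ge_1: "root_norm \<ge> 1"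
proof (rule ccontr)
  assume "\<not> root_norm \<ge> 1"
  moreover have "root_norm \<ge> 0" by (simp add: root_norm_def l2_norm_eq sqnorm_nonneg)
  ultimately have "shift_sqnorm rt - 1 < 0"
    unfolding root_norm_squared[symmetric] by (simp add: abs_square_less_1)
  then obtain n where "1 < real n * (- (shift_sqnorm rt - 1))"
    using ex_less_of_nat_mult[of "- (shift_sqnorm rt - 1)" 1] by auto
  then show False using shift_sqnorm_closed_form[of n] by (simp add: algebra_simps)
qed

lemma sqrt_shift_sqnorm: "sqrt (shift_sqnorm u) = xi (depth u) root_norm"
  using shift_sqnorm_closed_form[of "depth u"] root_norm_ge_1
  by (simp add: xi_def root_norm_squared)

section \<open>Peeling off the shift direction at every vertex\<close>

text \<open>pivot u is the child of u that branching_set leaves out.\<close>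

definition pivot :: "'v \<Rightarrow> 'v" where
  "pivot u = (SOME w. w \<in> Chi u)"

definition shift_dir :: "'v \<Rightarrow> 'v \<Rightarrow> complex" where
  "shift_dir u = (\<lambda>a. complex_of_real (1 / sqrt (shift_sqnorm u)) * lam a)"

text \<open>backshift g u is the coefficient of g restricted to Chi u along the unit vector
  S e_u / ||S e_u||; branch_part u g lists the remaining coordinates of that restriction,
  indexed by the children other than the pivot.\<close>

definition backshift :: "('v \<Rightarrow> complex) \<Rightarrow> 'v \<Rightarrow> complex" where
  "backshift g = (\<lambda>u. inner_on (Chi u) g (shift_dir u))"

definition branch_part :: "'v \<Rightarrow> ('v \<Rightarrow> complex) \<Rightarrow> 'v \<Rightarrow> complex" where
  "branch_part u = pivot_rotation (Chi u) (shift_dir u) (pivot u)"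

lemma pivot_in_children: "pivot u \<in> Chi u"
  unfolding pivot_def using children_nonempty[of u] by (simp add: some_in_eq)

lemma square_summable_shift_dir: "square_summable (Chi u) (shift_dir u)"
  unfolding shift_dir_def by (rule square_summable_scale[OF square_summable_weights])

lemma pointed_unit_vector_shift_dir: "pointed_unit_vector (Chi u) (shift_dir u) (pivot u)"
proof
  show "square_summable (Chi u) (shift_dir u)" by (rule square_summable_shift_dir)
  have "sqnorm (Chi u) (shift_dir u) = (cmod (complex_of_real (1 / sqrt (shift_sqnorm u))))\<^sup>2 * shift_sqnorm u"
    unfolding shift_dir_def shift_sqnorm_def by (rule sqnorm_scale)
  also have "\<dots> = (1 / sqrt (shift_sqnorm u))\<^sup>2 * shift_sqnorm u"
    by (simp only: norm_of_real power2_abs)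
  finally show "sqnorm (Chi u) (shift_dir u) = 1"
    using shift_sqnorm_pos[of u] by (simp add: power_divide)
qed (rule pivot_in_children)

lemma square_summable_children: "square_summable UNIV g \<Longrightarrow> square_summable (Chi u) g"
  by (rule square_summable_subset) auto

lemma esqnorm_children_eq:
  assumes g: "square_summable UNIV g"
  shows "esqnorm (Chi u) g = ennreal ((cmod (backshift g u))\<^sup>2) + esqnorm (Chi u - {pivot u}) (branch_part u g)"
proof -
  interpret pointed_unit_vector "Chi u" "shift_dir u" "pivot u" by (rule pointed_unit_vector_shift_dir)
  have gc: "square_summable (Chi u) g" by (rule square_summable_children[OF g])
  have "esqnorm (Chi u) g = ennreal ((cmod (backshift g u))\<^sup>2 + sqnorm (Chi u - {pivot u}) (branch_part u g))"
    using sqnorm_split_pivot_rotation[OF gc] by (simp add: esqnorm_eq_sqnorm[OF gc] backshift_def branch_part_def)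
  also have "\<dots> = ennreal ((cmod (backshift g u))\<^sup>2) + esqnorm (Chi u - {pivot u}) (branch_part u g)"
    using square_summable_subset[OF square_summable_pivot_rotation[OF gc], of "Chi u - {pivot u}"]
    by (simp add: ennreal_plus sqnorm_nonneg esqnorm_eq_sqnorm branch_part_def)
  finally show ?thesis .
qed

lemma esqnorm_backshift_split:
  assumes g: "square_summable UNIV g"
  shows "esqnorm UNIV g = ennreal ((cmod (g rt))\<^sup>2) + esqnorm UNIV (backshift g)
    + (\<Sum>\<^sub>\<infinity>u. esqnorm (Chi u - {pivot u}) (branch_part u g))"
proof -
  have "(\<Sum>\<^sub>\<infinity>u. esqnorm (Chi u) g) = (\<Sum>\<^sub>\<infinity>u. ennreal ((cmod (backshift g u))\<^sup>2) + esqnorm (Chi u - {pivot u}) (branch_part u g))"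
    by (rule infsum_cong) (rule esqnorm_children_eq[OF g])
  also have "\<dots> = esqnorm UNIV (backshift g) + (\<Sum>\<^sub>\<infinity>u. esqnorm (Chi u - {pivot u}) (branch_part u g))"
    unfolding esqnorm_def by (rule infsum_add) simp_all
  finally show ?thesis unfolding esqnorm_UNIV_eq by (simp add: add.assoc)
qed

lemma esqnorm_backshift_le:
  assumes "square_summable UNIV g"
  shows "esqnorm UNIV (backshift g) \<le> esqnorm UNIV g"
proof -
  have "esqnorm UNIV (backshift g) \<le> esqnorm UNIV (backshift g)
      + (ennreal ((cmod (g rt))\<^sup>2) + (\<Sum>\<^sub>\<infinity>u. esqnorm (Chi u - {pivot u}) (branch_part u g)))"
    by (rule add_increasing2) simp_all
  also have "\<dots> = esqnorm UNIV g" unfolding esqnorm_backshift_split[OF assms] by (simp add: ac_simps)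
  finally show ?thesis .
qed

lemma square_summable_backshift: "square_summable UNIV g \<Longrightarrow> square_summable UNIV (backshift g)"
  using esqnorm_backshift_le le_less_trans unfolding square_summable_iff_esqnorm_finite by blast

lemma backshift_lin:
  "square_summable UNIV f \<Longrightarrow> square_summable UNIV g \<Longrightarrow>
    backshift (\<lambda>a. c * f a + g a) = (\<lambda>u. c * backshift f u + backshift g u)"
  unfolding backshift_def
  by (intro ext inner_on_lin square_summable_children square_summable_shift_dir)

lemma square_summable_backshift_pow: "square_summable UNIV f \<Longrightarrow> square_summable UNIV ((backshift ^^ m) f)"
  by (induction m) (simp_all add: square_summable_backshift)

lemma backshift_pow_lin:
  "square_summable UNIV f \<Longrightarrow> square_summable UNIV g \<Longrightarrow>
    (backshift ^^ m) (\<lambda>a. c * f a + g a) = (\<lambda>u. c * (backshift ^^ m) f u + (backshift ^^ m) g u)"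
  by (induction m) (simp_all add: backshift_lin square_summable_backshift_pow)

lemma esqnorm_backshift_pow_le: "square_summable UNIV g \<Longrightarrow> esqnorm UNIV ((backshift ^^ m) g) \<le> esqnorm UNIV g"
proof (induction m)
  case (Suc m)
  have "esqnorm UNIV ((backshift ^^ Suc m) g) \<le> esqnorm UNIV ((backshift ^^ m) g)"
    using esqnorm_backshift_le[OF square_summable_backshift_pow[OF Suc.prems, of m]] by simp
  also have "\<dots> \<le> esqnorm UNIV g" using Suc by simp
  finally show ?case .
qed simp

definition deep_part :: "nat \<Rightarrow> ('v \<Rightarrow> complex) \<Rightarrow> 'v \<Rightarrow> complex" where
  "deep_part K g = (\<lambda>v. if K \<le> depth v then g v else 0)"

lemma square_summable_deep_part: "square_summable C g \<Longrightarrow> square_summable C (deep_part K g)"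
  unfolding square_summable_def
  by (rule summable_on_comparison_test[of "\<lambda>a. (cmod (g a))\<^sup>2"]) (auto simp: deep_part_def)

lemma backshift_deep_part: "backshift (deep_part (Suc K) g) = deep_part K (backshift g)"
proof
  fix u
  have "inner_on (Chi u) (deep_part (Suc K) g) (shift_dir u) = inner_on (Chi u) (if K \<le> depth u then g else (\<lambda>_. 0)) (shift_dir u)"
    by (rule inner_on_cong) (auto simp: deep_part_def depth_child)
  then show "backshift (deep_part (Suc K) g) u = deep_part K (backshift g) u"
    by (simp add: backshift_def deep_part_def inner_on_def)
qed

lemma backshift_pow_deep_part: "(backshift ^^ M) (deep_part (M + K) g) = deep_part K ((backshift ^^ M) g)"
proof (induction M arbitrary: K)
  case (Suc M)
  have "(backshift ^^ Suc M) (deep_part (Suc M + K) g) = backshift ((backshift ^^ M) (deep_part (M + Suc K) g))"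
    by simp
  also have "\<dots> = deep_part K ((backshift ^^ Suc M) g)" by (simp only: Suc.IH backshift_deep_part funpow.simps o_apply)
  finally show ?case .
qed (simp add: deep_part_def)

lemma esqnorm_deep_part_small:
  assumes f: "square_summable UNIV f" and e: "e > 0"
  shows "\<exists>M. esqnorm UNIV (deep_part M f) \<le> ennreal e"
proof -
  define h where "h = (\<lambda>v. (cmod (f v))\<^sup>2)"
  have hs: "h summable_on UNIV" using f by (simp add: square_summable_def h_def)
  obtain F where F: "finite F" "dist (sum h F) (infsum h UNIV) \<le> e"
    using infsum_finite_approximation[OF hs e] by blast
  define M where "M = Suc (Max (insert 0 (depth ` F)))"
  have FM: "v \<in> F \<Longrightarrow> depth v < M" for v
    using F(1) unfolding M_def by (simp add: le_imp_less_Suc)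
  have sP: "square_summable UNIV (deep_part M f)" by (rule square_summable_deep_part[OF f])
  have s2: "(\<lambda>v. if v \<in> F then h v else 0) summable_on UNIV"
    by (rule finite_nonzero_values_imp_summable_on) (rule finite_subset[OF _ F(1)], auto)
  have sumF: "sum h F = (\<Sum>\<^sub>\<infinity>v. if v \<in> F then h v else 0)"
    using F(1) by (subst infsum_cong_neutral[where T = F and g = h]) auto
  have "sqnorm UNIV (deep_part M f) + sum h F = (\<Sum>\<^sub>\<infinity>v. (cmod (deep_part M f v))\<^sup>2 + (if v \<in> F then h v else 0))"
    unfolding sumF sqnorm_def
    by (rule infsum_add[symmetric]) (use sP s2 in \<open>simp_all add: square_summable_def\<close>)
  also have "\<dots> \<le> infsum h UNIV"
  proof (rule infsum_mono)
    show "(\<lambda>v. (cmod (deep_part M f v))\<^sup>2 + (if v \<in> F then h v else 0)) summable_on UNIV"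
      using sP s2 by (intro summable_on_add) (simp_all add: square_summable_def)
    show "(cmod (deep_part M f v))\<^sup>2 + (if v \<in> F then h v else 0) \<le> h v" for v
      using FM[of v] by (auto simp: deep_part_def h_def)
  qed (rule hs)
  finally have "sqnorm UNIV (deep_part M f) \<le> e" using F(2) by (simp add: dist_real_def)
  then have "esqnorm UNIV (deep_part M f) \<le> ennreal e"
    unfolding esqnorm_eq_sqnorm[OF sP] by (rule ennreal_leI)
  then show ?thesis by blast
qed

text \<open>Iterating backshift drives every vector to 0 in norm, because M steps of it
  annihilate everything above depth M.\<close>

lemma esqnorm_backshift_pow_small:
  assumes f: "square_summable UNIV f" and e: "e > 0"
  shows "\<exists>M. esqnorm UNIV ((backshift ^^ M) f) \<le> ennreal e"
proof -
  obtain M where M: "esqnorm UNIV (deep_part M f) \<le> ennreal e"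
    using esqnorm_deep_part_small[OF f e] by blast
  have "(backshift ^^ M) (deep_part M f) = (backshift ^^ M) f"
    using backshift_pow_deep_part[of M 0 f] by (simp add: deep_part_def)
  then have "esqnorm UNIV ((backshift ^^ M) f) \<le> esqnorm UNIV (deep_part M f)"
    using esqnorm_backshift_pow_le[OF square_summable_deep_part[OF f, of M], of M] by simp
  then show ?thesis using M order_trans by blast
qed

definition depth_scale :: "(nat \<Rightarrow> real) \<Rightarrow> ('v \<Rightarrow> complex) \<Rightarrow> 'v \<Rightarrow> complex" where
  "depth_scale \<phi> g = (\<lambda>v. complex_of_real (\<phi> (depth v)) * g v)"

lemma backshift_shift: "backshift (S f) = depth_scale (\<lambda>n. xi n root_norm) f"
proof
  fix u
  have "inner_on (Chi u) (S f) (shift_dir u) = inner_on (Chi u) (\<lambda>c. f u * lam c) (shift_dir u)"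
    by (rule inner_on_cong) (simp_all add: shift_child mult.commute)
  also have "\<dots> = f u * inner_on (Chi u) lam (shift_dir u)"
    by (rule inner_on_scale_left)
  also have "inner_on (Chi u) lam (shift_dir u) = complex_of_real (sqrt (shift_sqnorm u))"
  proof -
    have "inner_on (Chi u) lam (shift_dir u)
        = (\<Sum>\<^sub>\<infinity>a\<in>Chi u. complex_of_real (1 / sqrt (shift_sqnorm u)) * (lam a * cnj (lam a)))"
      unfolding inner_on_def shift_dir_def
      by (rule infsum_cong) (simp only: complex_cnj_mult complex_cnj_complex_of_real mult_ac)
    also have "\<dots> = complex_of_real (1 / sqrt (shift_sqnorm u)) * inner_on (Chi u) lam lam"
      unfolding inner_on_def by (rule infsum_cmult_right')
    also have "\<dots> = complex_of_real (1 / sqrt (shift_sqnorm u) * shift_sqnorm u)"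
      by (simp add: inner_on_self[OF square_summable_weights] shift_sqnorm_def)
    finally show ?thesis using shift_sqnorm_pos[of u] by (simp add: real_div_sqrt)
  qed
  finally show "backshift (S f) u = depth_scale (\<lambda>n. xi n root_norm) f u"
    by (simp add: backshift_def depth_scale_def sqrt_shift_sqnorm mult.commute)
qed

lemma backshift_depth_scale: "backshift (depth_scale \<phi> g) = depth_scale (\<lambda>n. \<phi> (Suc n)) (backshift g)"
proof
  fix u
  have "inner_on (Chi u) (depth_scale \<phi> g) (shift_dir u)
      = inner_on (Chi u) (\<lambda>c. complex_of_real (\<phi> (Suc (depth u))) * g c) (shift_dir u)"
    by (rule inner_on_cong) (simp_all add: depth_scale_def depth_child)
  then show "backshift (depth_scale \<phi> g) u = depth_scale (\<lambda>n. \<phi> (Suc n)) (backshift g) u"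
    by (simp add: backshift_def depth_scale_def inner_on_scale_left)
qed

lemma backshift_pow_Suc_shift:
  "(backshift ^^ Suc m) (S f) = depth_scale (\<lambda>n. xi (n + m) root_norm) ((backshift ^^ m) f)"
proof -
  have "(backshift ^^ m) (depth_scale \<phi> g) = depth_scale (\<lambda>n. \<phi> (n + m)) ((backshift ^^ m) g)" for \<phi> g
    by (induction m) (simp_all add: backshift_depth_scale)
  then show ?thesis by (simp only: funpow_Suc_right o_apply backshift_shift)
qed

text \<open>On Chi u the vector S f is a multiple of shift_dir u, so nothing is left off the pivot.\<close>

lemma branch_part_shift:
  assumes c: "c \<in> Chi u" "c \<noteq> pivot u"
  shows "branch_part u (S f) c = 0"
proof -
  interpret pointed_unit_vector "Chi u" "shift_dir u" "pivot u" by (rule pointed_unit_vector_shift_dir)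
  have "S f c' = (f u * complex_of_real (sqrt (shift_sqnorm u))) * shift_dir u c'" if "c' \<in> Chi u" for c'
    using that shift_sqnorm_pos[of u] by (simp add: shift_child shift_dir_def field_simps flip: of_real_mult)
  then have "branch_part u (S f) c
      = branch_part u (\<lambda>c'. (f u * complex_of_real (sqrt (shift_sqnorm u))) * shift_dir u c') c"
    unfolding branch_part_def using c by (intro pivot_rotation_cong) auto
  also have "\<dots> = 0"
    using c unfolding branch_part_def pivot_rotation_scale[OF square_summable_vec] by (simp add: pivot_rotation_self)
  finally show ?thesis .
qed

lemma branch_part_depth_scale:
  assumes g: "square_summable UNIV g" and c: "c \<in> Chi u"
  shows "branch_part u (depth_scale \<phi> g) c = complex_of_real (\<phi> (Suc (depth u))) * branch_part u g c"
proof -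
  interpret pointed_unit_vector "Chi u" "shift_dir u" "pivot u" by (rule pointed_unit_vector_shift_dir)
  have "branch_part u (depth_scale \<phi> g) c = branch_part u (\<lambda>c'. complex_of_real (\<phi> (Suc (depth u))) * g c') c"
    unfolding branch_part_def using c by (intro pivot_rotation_cong) (simp_all add: depth_scale_def depth_child)
  also have "\<dots> = complex_of_real (\<phi> (Suc (depth u))) * branch_part u g c"
    unfolding branch_part_def by (rule pivot_rotation_scale[OF square_summable_children[OF g]])
  finally show ?thesis .
qed

section \<open>The unitary onto the model space\<close>

abbreviation "J \<equiv> sum_index par rt"
abbreviation "root_index \<equiv> (0::nat, rt, rt)"
abbreviation "model_index \<equiv> J \<times> (UNIV :: nat set)"

lemma mem_sum_index:
  "(k, u, c) \<in> J \<longleftrightarrow> (k, u, c) = root_index \<or> (k = Suc (depth u) \<and> c \<in> Chi u \<and> c \<noteq> pivot u)"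
  unfolding sum_index_def branching_set_def generation_eq pivot_def by auto

lemma sum_index_cases:
  assumes "j \<in> J"
  obtains "j = root_index" | u c where "j = (Suc (depth u), u, c)" "c \<in> Chi u" "c \<noteq> pivot u"
  using assms by (cases j) (auto simp: mem_sum_index)

lemma ennreal_infsum_sum_index:
  fixes \<psi> :: "nat \<times> 'v \<times> 'v \<Rightarrow> ennreal"
  shows "infsum \<psi> J = \<psi> root_index + (\<Sum>\<^sub>\<infinity>u. \<Sum>\<^sub>\<infinity>c\<in>Chi u - {pivot u}. \<psi> (Suc (depth u), u, c))"
proof -
  define b :: "'v \<times> 'v \<Rightarrow> nat \<times> 'v \<times> 'v" where "b = (\<lambda>(u, c). (Suc (depth u), u, c))"
  have J: "J = insert root_index (b ` (SIGMA u:UNIV. Chi u - {pivot u}))"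
    by (auto simp: mem_sum_index b_def image_iff)
  have "root_index \<notin> b ` (SIGMA u:UNIV. Chi u - {pivot u})" by (auto simp: b_def)
  then have "infsum \<psi> J = \<psi> root_index + infsum (\<psi> \<circ> b) (SIGMA u:UNIV. Chi u - {pivot u})"
    unfolding J by (simp add: infsum_insert infsum_reindex inj_on_def b_def)
  then show ?thesis by (simp add: ennreal_infsum_Sigma b_def)
qed

lemma esqnorm_model_index: "esqnorm model_index F = (\<Sum>\<^sub>\<infinity>m. esqnorm J (\<lambda>j. F (j, m)))"
proof -
  have "model_index = prod.swap ` (UNIV \<times> J)" by auto
  then have "esqnorm model_index F = infsum ((\<lambda>p. ennreal ((cmod (F p))\<^sup>2)) \<circ> prod.swap) (UNIV \<times> J)"
    unfolding esqnorm_def by (simp add: infsum_reindex)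
  then show ?thesis by (simp add: ennreal_infsum_Sigma esqnorm_def)
qed

definition advance :: "((nat \<times> 'v \<times> 'v) \<times> nat \<Rightarrow> complex) \<Rightarrow> (nat \<times> 'v \<times> 'v) \<times> nat \<Rightarrow> complex" where
  "advance F = (\<lambda>(j, m). F (j, Suc m))"

definition branch_esqnorm :: "((nat \<times> 'v \<times> 'v) \<times> nat \<Rightarrow> complex) \<Rightarrow> 'v \<Rightarrow> ennreal" where
  "branch_esqnorm F u = esqnorm (Chi u - {pivot u}) (\<lambda>c. F ((Suc (depth u), u, c), 0))"

lemma esqnorm_model_index_eq:
  "esqnorm model_index F
    = ennreal ((cmod (F (root_index, 0)))\<^sup>2) + (\<Sum>\<^sub>\<infinity>u. branch_esqnorm F u) + esqnorm model_index (advance F)"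
  unfolding esqnorm_model_index ennreal_infsum_nat_Suc[of "\<lambda>m. esqnorm J (\<lambda>j. F (j, m))"]
  by (simp add: esqnorm_def ennreal_infsum_sum_index branch_esqnorm_def advance_def)

lemma advance_mem_l2:
  assumes F: "F \<in> l2 model_index"
  shows "advance F \<in> l2 model_index"
proof -
  have "esqnorm model_index (advance F) \<le> esqnorm model_index F"
    unfolding esqnorm_model_index_eq[of F] by (simp add: add_increasing)
  moreover have "esqnorm model_index F < \<infinity>"
    using F by (simp add: mem_l2_iff square_summable_iff_esqnorm_finite)
  ultimately show ?thesis
    using F by (auto simp: mem_l2_iff square_summable_iff_esqnorm_finite advance_def)
qed

lemma branch_esqnorm_le: "branch_esqnorm F u \<le> esqnorm model_index F"
proof -
  have "branch_esqnorm F u \<le> (\<Sum>\<^sub>\<infinity>u. branch_esqnorm F u)"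
    using ennreal_sum_le_infsum[of "{u}" UNIV "branch_esqnorm F"] by simp
  also have "\<dots> \<le> esqnorm model_index F"
    unfolding esqnorm_model_index_eq[of F] by (simp add: add_increasing add_increasing2)
  finally show ?thesis .
qed

text \<open>f is sent to the data (backshift^m f)(rt) on the copy of S_[x] and
  branch_part u (backshift^m f) on the copies attached to u, m counting the position in
  each copy of l^2(N).\<close>

definition model_map :: "('v \<Rightarrow> complex) \<Rightarrow> (nat \<times> 'v \<times> 'v) \<times> nat \<Rightarrow> complex" where
  "model_map f = (\<lambda>((k, u, c), m). if (k, u, c) \<notin> J then 0
     else if k = 0 then (backshift ^^ m) f rt else branch_part u ((backshift ^^ m) f) c)"

lemma model_map_root: "model_map f (root_index, m) = (backshift ^^ m) f rt"
  by (simp add: model_map_def mem_sum_index)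

lemma model_map_branch:
  "c \<in> Chi u \<Longrightarrow> c \<noteq> pivot u \<Longrightarrow> model_map f ((Suc (depth u), u, c), m) = branch_part u ((backshift ^^ m) f) c"
  by (simp add: model_map_def mem_sum_index)

lemma model_map_Suc: "model_map f (j, Suc m) = model_map (backshift f) (j, m)"
proof -
  obtain k u c where j: "j = (k, u, c)" by (cases j)
  have "(backshift ^^ Suc m) f = (backshift ^^ m) (backshift f)" by (simp only: funpow_Suc_right o_apply)
  then show ?thesis unfolding model_map_def j by simp
qed

lemma model_map_outside: "p \<notin> model_index \<Longrightarrow> model_map f p = 0"
  by (auto simp: model_map_def split: prod.splits)

lemma esqnorm_model_map_column:
  assumes f: "square_summable UNIV f"
  shows "esqnorm UNIV ((backshift ^^ m) f)
    = esqnorm J (\<lambda>j. model_map f (j, m)) + esqnorm UNIV ((backshift ^^ Suc m) f)"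
proof -
  have "esqnorm J (\<lambda>j. model_map f (j, m)) = ennreal ((cmod ((backshift ^^ m) f rt))\<^sup>2)
      + (\<Sum>\<^sub>\<infinity>u. \<Sum>\<^sub>\<infinity>c\<in>Chi u - {pivot u}. ennreal ((cmod (model_map f ((Suc (depth u), u, c), m)))\<^sup>2))"
    unfolding esqnorm_def ennreal_infsum_sum_index by (simp add: model_map_root)
  also have "(\<Sum>\<^sub>\<infinity>u. \<Sum>\<^sub>\<infinity>c\<in>Chi u - {pivot u}. ennreal ((cmod (model_map f ((Suc (depth u), u, c), m)))\<^sup>2))
      = (\<Sum>\<^sub>\<infinity>u. esqnorm (Chi u - {pivot u}) (branch_part u ((backshift ^^ m) f)))"
    unfolding esqnorm_def by (intro infsum_cong) (simp add: model_map_branch)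
  finally have "esqnorm J (\<lambda>j. model_map f (j, m)) = ennreal ((cmod ((backshift ^^ m) f rt))\<^sup>2)
      + (\<Sum>\<^sub>\<infinity>u. esqnorm (Chi u - {pivot u}) (branch_part u ((backshift ^^ m) f)))" .
  then show ?thesis
    using esqnorm_backshift_split[OF square_summable_backshift_pow[OF f, of m]] by (simp add: ac_simps)
qed

lemma esqnorm_model_map_partial:
  assumes f: "square_summable UNIV f"
  shows "(\<Sum>m<M. esqnorm J (\<lambda>j. model_map f (j, m))) + esqnorm UNIV ((backshift ^^ M) f) = esqnorm UNIV f"
proof (induction M)
  case (Suc M)
  then show ?case using esqnorm_model_map_column[OF f, of M] by (simp add: ac_simps)
qed simp

lemma esqnorm_model_map:
  assumes f: "square_summable UNIV f"
  shows "esqnorm model_index (model_map f) = esqnorm UNIV f"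
  unfolding esqnorm_model_index
proof (rule antisym)
  show "(\<Sum>\<^sub>\<infinity>m. esqnorm J (\<lambda>j. model_map f (j, m))) \<le> esqnorm UNIV f"
  proof (rule infsum_le_finite_sums)
    fix F :: "nat set" assume "finite F"
    then obtain M where "F \<subseteq> {..<M}" using finite_nat_iff_bounded by auto
    then have "(\<Sum>m\<in>F. esqnorm J (\<lambda>j. model_map f (j, m))) \<le> (\<Sum>m<M. esqnorm J (\<lambda>j. model_map f (j, m)))"
      by (intro sum_mono2) auto
    also have "\<dots> \<le> esqnorm UNIV f"
      unfolding esqnorm_model_map_partial[OF f, of M, symmetric] by simp
    finally show "(\<Sum>m\<in>F. esqnorm J (\<lambda>j. model_map f (j, m))) \<le> esqnorm UNIV f" .
  qed simp
  show "esqnorm UNIV f \<le> (\<Sum>\<^sub>\<infinity>m. esqnorm J (\<lambda>j. model_map f (j, m)))"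
  proof (rule ennreal_le_epsilon)
    fix e :: real assume "0 < e"
    then obtain M where M: "esqnorm UNIV ((backshift ^^ M) f) \<le> ennreal e"
      using esqnorm_backshift_pow_small[OF f] by blast
    have "esqnorm UNIV f = (\<Sum>m<M. esqnorm J (\<lambda>j. model_map f (j, m))) + esqnorm UNIV ((backshift ^^ M) f)"
      by (rule esqnorm_model_map_partial[OF f, symmetric])
    also have "\<dots> \<le> (\<Sum>\<^sub>\<infinity>m. esqnorm J (\<lambda>j. model_map f (j, m))) + ennreal e"
      by (intro add_mono ennreal_sum_le_infsum M) auto
    finally show "esqnorm UNIV f \<le> (\<Sum>\<^sub>\<infinity>m. esqnorm J (\<lambda>j. model_map f (j, m))) + ennreal e" .
  qed
qed

lemma model_map_mem_l2: "square_summable UNIV f \<Longrightarrow> model_map f \<in> l2 model_index"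
  using esqnorm_model_map[of f] model_map_outside[of _ f]
  by (simp add: mem_l2_iff square_summable_iff_esqnorm_finite)

lemma sqnorm_model_map: "square_summable UNIV f \<Longrightarrow> sqnorm model_index (model_map f) = sqnorm UNIV f"
  using esqnorm_model_map[of f] model_map_mem_l2[of f]
  by (simp add: mem_l2_iff esqnorm_eq_sqnorm ennreal_inj sqnorm_nonneg)

lemma model_map_lin:
  assumes f: "square_summable UNIV f" and g: "square_summable UNIV g"
  shows "model_map (\<lambda>a. c * f a + g a) = (\<lambda>p. c * model_map f p + model_map g p)"
proof
  fix p :: "(nat \<times> 'v \<times> 'v) \<times> nat"
  obtain j m where p: "p = (j, m)" by (cases p)
  show "model_map (\<lambda>a. c * f a + g a) p = c * model_map f p + model_map g p"
  proof (cases "j \<in> J")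
    case True
    then show ?thesis
    proof (cases rule: sum_index_cases)
      case 1 then show ?thesis by (simp add: p model_map_root backshift_pow_lin[OF f g])
    next
      case (2 u c')
      interpret pointed_unit_vector "Chi u" "shift_dir u" "pivot u" by (rule pointed_unit_vector_shift_dir)
      show ?thesis
        using 2 square_summable_children[OF square_summable_backshift_pow[OF f]]
          square_summable_children[OF square_summable_backshift_pow[OF g]]
        by (simp add: p model_map_branch backshift_pow_lin[OF f g] branch_part_def pivot_rotation_lin)
    qed
  qed (simp add: p model_map_outside)
qed

text \<open>backshift turns S into multiplication by xi_(depth) x, and xi_m (xi_k x) = xi_(k+m) x
  matches this with the weights of the copy of S_[xi_k x] attached at depth k - 1.\<close>

lemma model_map_shift:
  assumes f: "square_summable UNIV f"
  shows "model_map (S f) (j, m) = shift_sum (sum_param root_norm) (model_map f) (j, m)"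
proof (cases "j \<in> J")
  case False
  then show ?thesis by (cases m) (simp_all add: model_map_outside shift_sum_def)
next
  case True
  then show ?thesis
  proof (cases rule: sum_index_cases)
    case 1
    show ?thesis
    proof (cases m)
      case (Suc m')
      have "(backshift ^^ m) (S f) rt = complex_of_real (xi m' root_norm) * (backshift ^^ m') f rt"
        unfolding Suc backshift_pow_Suc_shift by (simp add: depth_scale_def depth_root)
      then show ?thesis using 1 Suc by (simp add: model_map_root shift_sum_def sum_param_def)
    qed (simp add: 1 model_map_root shift_root shift_sum_def)
  next
    case (2 u c)
    show ?thesis
    proof (cases m)
      case 0
      then show ?thesis using 2 by (simp add: model_map_branch shift_sum_def branch_part_shift)
    next
      case (Suc m')
      then show ?thesis
        using 2 root_norm_ge_1
        by (simp add: model_map_branch shift_sum_def sum_param_def xi_xi backshift_pow_Suc_shift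
            branch_part_depth_scale square_summable_backshift_pow[OF f] del: funpow.simps)
    qed
  qed
qed

text \<open>The preimage of F is built generation by generation: on Chi u it undoes
  branch_part u, with the value at the pivot supplied by the preimage of advance F at u,
  which is what backshift must return there.\<close>

primrec model_inv_upto :: "nat \<Rightarrow> ((nat \<times> 'v \<times> 'v) \<times> nat \<Rightarrow> complex) \<Rightarrow> 'v \<Rightarrow> complex" where
  "model_inv_upto 0 F = (\<lambda>v. F (root_index, 0))"
| "model_inv_upto (Suc n) F = (\<lambda>v. pivot_rotation_inv (Chi (par v)) (shift_dir (par v)) (pivot (par v))
      (\<lambda>c. if c = pivot (par v) then model_inv_upto n (advance F) (par v) else F ((Suc n, par v, c), 0)) v)"

definition model_inv :: "((nat \<times> 'v \<times> 'v) \<times> nat \<Rightarrow> complex) \<Rightarrow> 'v \<Rightarrow> complex" where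
  "model_inv F = (\<lambda>v. model_inv_upto (depth v) F v)"

definition model_inv_children :: "((nat \<times> 'v \<times> 'v) \<times> nat \<Rightarrow> complex) \<Rightarrow> 'v \<Rightarrow> 'v \<Rightarrow> complex" where
  "model_inv_children F u = (\<lambda>c. if c = pivot u then model_inv (advance F) u else F ((Suc (depth u), u, c), 0))"

lemma model_inv_root: "model_inv F rt = F (root_index, 0)"
  by (simp add: model_inv_def depth_root)

lemma model_inv_child:
  assumes c: "c \<in> Chi u"
  shows "model_inv F c = pivot_rotation_inv (Chi u) (shift_dir u) (pivot u) (model_inv_children F u) c"
proof -
  have "par c = u" "depth c = Suc (depth u)" using c by (auto simp: mem_children_iff depth_child)
  then have "model_inv F c = pivot_rotation_inv (Chi u) (shift_dir u) (pivot u)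
      (\<lambda>c'. if c' = pivot u then model_inv_upto (depth u) (advance F) u else F ((Suc (depth u), u, c'), 0)) c"
    by (simp only: model_inv_def model_inv_upto.simps)
  then show ?thesis unfolding model_inv_children_def model_inv_def .
qed

lemma esqnorm_model_inv_children:
  "esqnorm (Chi u) (model_inv_children F u) = ennreal ((cmod (model_inv (advance F) u))\<^sup>2) + branch_esqnorm F u"
proof -
  have "esqnorm (Chi u - {pivot u}) (model_inv_children F u) = branch_esqnorm F u"
    unfolding branch_esqnorm_def by (rule esqnorm_cong) (simp add: model_inv_children_def)
  then show ?thesis
    using esqnorm_remove[OF pivot_in_children, of u "model_inv_children F u"]
    by (simp add: model_inv_children_def)
qed

lemma square_summable_model_inv_children:
  "F \<in> l2 model_index \<Longrightarrow> square_summable (Chi u) (model_inv_children F u)"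
  using branch_esqnorm_le[of F u]
  by (auto simp: square_summable_iff_esqnorm_finite esqnorm_model_inv_children mem_l2_iff
      intro: le_less_trans)

lemma esqnorm_children_model_inv:
  assumes F: "F \<in> l2 model_index"
  shows "esqnorm (Chi u) (model_inv F) = ennreal ((cmod (model_inv (advance F) u))\<^sup>2) + branch_esqnorm F u"
proof -
  interpret pointed_unit_vector "Chi u" "shift_dir u" "pivot u" by (rule pointed_unit_vector_shift_dir)
  have h: "square_summable (Chi u) (model_inv_children F u)" by (rule square_summable_model_inv_children[OF F])
  have "esqnorm (Chi u) (model_inv F) = esqnorm (Chi u) (pivot_rotation_inv (Chi u) (shift_dir u) (pivot u) (model_inv_children F u))"
    by (rule esqnorm_cong) (simp add: model_inv_child)
  also have "\<dots> = esqnorm (Chi u) (model_inv_children F u)"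
    using h square_summable_pivot_rotation_inv[OF h]
    by (simp add: esqnorm_eq_sqnorm sqnorm_pivot_rotation_inv)
  finally show ?thesis unfolding esqnorm_model_inv_children .
qed

lemma esqnorm_model_inv_depth_le:
  "F \<in> l2 model_index \<Longrightarrow> esqnorm {v. depth v \<le> K} (model_inv F) \<le> esqnorm model_index F"
proof (induction K arbitrary: F)
  case 0
  have "{v. depth v \<le> 0} = {rt}" using depth_eq_0_iff by auto
  then show ?case
    unfolding esqnorm_model_index_eq[of F] by (simp add: esqnorm_def model_inv_root add.assoc add_increasing2)
next
  case (Suc K)
  have "esqnorm {v. depth v \<le> Suc K} (model_inv F)
      = ennreal ((cmod (F (root_index, 0)))\<^sup>2) + (\<Sum>\<^sub>\<infinity>u\<in>{u. depth u \<le> K}. esqnorm (Chi u) (model_inv F))"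
    unfolding depth_le_Suc_eq esqnorm_insert_root_children model_inv_root ..
  also have "(\<Sum>\<^sub>\<infinity>u\<in>{u. depth u \<le> K}. esqnorm (Chi u) (model_inv F))
      = esqnorm {u. depth u \<le> K} (model_inv (advance F)) + (\<Sum>\<^sub>\<infinity>u\<in>{u. depth u \<le> K}. branch_esqnorm F u)"
    unfolding esqnorm_children_model_inv[OF Suc.prems] esqnorm_def[of "{u. depth u \<le> K}"]
    by (rule infsum_add) simp_all
  also have "\<dots> \<le> esqnorm model_index (advance F) + (\<Sum>\<^sub>\<infinity>u. branch_esqnorm F u)"
    by (intro add_mono Suc.IH advance_mem_l2 Suc.prems ennreal_infsum_mono_set) auto
  finally show ?case
    unfolding esqnorm_model_index_eq[of F] by (simp add: ac_simps add_left_mono)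
qed

lemma square_summable_model_inv:
  assumes F: "F \<in> l2 model_index"
  shows "square_summable UNIV (model_inv F)"
proof -
  have "esqnorm UNIV (model_inv F) \<le> esqnorm model_index F"
    unfolding esqnorm_def[of UNIV]
  proof (rule infsum_le_finite_sums)
    fix X :: "'v set" assume X: "finite X"
    define K where "K = Max (insert 0 (depth ` X))"
    have "(\<Sum>v\<in>X. ennreal ((cmod (model_inv F v))\<^sup>2)) \<le> esqnorm {v. depth v \<le> K} (model_inv F)"
      unfolding esqnorm_def using X by (intro ennreal_sum_le_infsum) (auto simp: K_def)
    also have "\<dots> \<le> esqnorm model_index F" by (rule esqnorm_model_inv_depth_le[OF F])
    finally show "(\<Sum>v\<in>X. ennreal ((cmod (model_inv F v))\<^sup>2)) \<le> esqnorm model_index F" .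
  qed simp
  then show ?thesis
    using F by (auto simp: square_summable_iff_esqnorm_finite mem_l2_iff intro: le_less_trans)
qed

lemma branch_part_model_inv:
  assumes F: "F \<in> l2 model_index" and c: "c \<in> Chi u"
  shows "branch_part u (model_inv F) c = model_inv_children F u c"
proof -
  interpret pointed_unit_vector "Chi u" "shift_dir u" "pivot u" by (rule pointed_unit_vector_shift_dir)
  have "branch_part u (model_inv F) c
      = pivot_rotation (Chi u) (shift_dir u) (pivot u) (pivot_rotation_inv (Chi u) (shift_dir u) (pivot u) (model_inv_children F u)) c"
    unfolding branch_part_def using c by (intro pivot_rotation_cong) (simp_all add: model_inv_child)
  then show ?thesis
    by (simp add: pivot_rotation_pivot_rotation_inv[OF square_summable_model_inv_children[OF F]])
qed

lemma backshift_model_inv: "F \<in> l2 model_index \<Longrightarrow> backshift (model_inv F) = model_inv (advance F)"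
proof
  fix u assume F: "F \<in> l2 model_index"
  interpret pointed_unit_vector "Chi u" "shift_dir u" "pivot u" by (rule pointed_unit_vector_shift_dir)
  have "backshift (model_inv F) u = branch_part u (model_inv F) (pivot u)"
    unfolding backshift_def branch_part_def
    by (rule pivot_rotation_at_pivot[symmetric]) (rule square_summable_children[OF square_summable_model_inv[OF F]])
  then show "backshift (model_inv F) u = model_inv (advance F) u"
    by (simp add: branch_part_model_inv[OF F pivot_in_children] model_inv_children_def)
qed

lemma model_map_model_inv: "F \<in> l2 model_index \<Longrightarrow> model_map (model_inv F) (j, m) = F (j, m)"
proof (induction m arbitrary: F)
  case 0
  show ?case
  proof (cases "j \<in> J")
    case True
    then show ?thesis
    proof (cases rule: sum_index_cases)
      case 1 then show ?thesis by (simp add: model_map_root model_inv_root)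
    next
      case 2 then show ?thesis
        using branch_part_model_inv[OF 0] by (simp add: model_map_branch model_inv_children_def)
    qed
  next
    case False
    from 0 have "\<forall>p. p \<notin> model_index \<longrightarrow> F p = 0" unfolding mem_l2_iff by (rule conjunct1)
    then have "F (j, 0) = 0" using False by blast
    with False show ?thesis by (simp add: model_map_outside)
  qed
next
  case (Suc m)
  have "model_map (model_inv F) (j, Suc m) = model_map (model_inv (advance F)) (j, m)"
    by (simp add: model_map_Suc backshift_model_inv[OF Suc.prems])
  also have "\<dots> = F (j, Suc m)"
    using Suc.IH[OF advance_mem_l2[OF Suc.prems]] by (simp add: advance_def)
  finally show ?case .
qed

lemma l2_inner_model_map:
  assumes f: "square_summable UNIV f" and g: "square_summable UNIV g"
  shows "l2_inner (model_map f) (model_map g) = l2_inner f g"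
proof -
  have "l2_inner (model_map f) (model_map g) = inner_on model_index (model_map f) (model_map g)"
    unfolding l2_inner_eq inner_on_def by (rule infsum_cong_neutral) (auto simp: model_map_outside)
  also have "\<dots> = inner_on UNIV f g"
  proof (rule inner_on_eq_if_sqnorm_eq[OF f g])
    show "square_summable model_index (model_map f)" "square_summable model_index (model_map g)"
      using model_map_mem_l2 f g by (simp_all add: mem_l2_iff)
    show "sqnorm model_index (\<lambda>p. model_map f p + c * model_map g p) = sqnorm UNIV (\<lambda>a. f a + c * g a)" for c
      using model_map_lin[OF g f, of c] sqnorm_model_map[OF square_summable_lin[OF g f, of c]]
      by (simp add: add.commute)
  qed
  finally show ?thesis by (simp add: l2_inner_eq)
qed

lemma inj_on_model_map: "inj_on model_map (l2 UNIV)"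
proof (rule inj_onI)
  fix f g assume "f \<in> l2 UNIV" "g \<in> l2 UNIV" and eq: "model_map f = model_map g"
  then have f: "square_summable UNIV f" and g: "square_summable UNIV g" by (simp_all add: l2_UNIV_iff)
  have d: "square_summable UNIV (\<lambda>a. (-1) * g a + f a)" by (intro square_summable_lin f g)
  have "model_map (\<lambda>a. (-1) * g a + f a) = (\<lambda>p. 0)"
    unfolding model_map_lin[OF g f] eq by simp
  then have "sqnorm UNIV (\<lambda>a. (-1) * g a + f a) = 0"
    using sqnorm_model_map[OF d] by (simp add: sqnorm_def)
  then show "f = g" using sqnorm_eq_0_imp[OF d] by (simp add: fun_eq_iff)
qed

lemma model_map_image: "model_map ` l2 UNIV = l2 model_index"
proof (intro set_eqI iffI)
  fix F assume "F \<in> model_map ` l2 UNIV"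
  then show "F \<in> l2 model_index" using model_map_mem_l2 by (auto simp: l2_UNIV_iff)
next
  fix F assume F: "F \<in> l2 model_index"
  then have "F = model_map (model_inv F)" by (auto simp: model_map_model_inv)
  moreover have "model_inv F \<in> l2 UNIV" using square_summable_model_inv[OF F] by (simp add: l2_UNIV_iff)
  ultimately show "F \<in> model_map ` l2 UNIV" by blast
qed

lemma unitarily_equivalent_model:
  "unitarily_equivalent UNIV S model_index (shift_sum (sum_param root_norm))"
  unfolding unitarily_equivalent_def
proof (intro exI conjI ballI allI)
  show "bij_betw model_map (l2 UNIV) (l2 model_index)"
    by (rule bij_betw_imageI[OF inj_on_model_map model_map_image])
  show "model_map (\<lambda>a. c * f a + g a) = (\<lambda>p. c * model_map f p + model_map g p)"
    if "f \<in> l2 UNIV" "g \<in> l2 UNIV" for f g c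
    using that by (intro model_map_lin) (simp_all add: l2_UNIV_iff)
  show "l2_inner (model_map f) (model_map g) = l2_inner f g" if "f \<in> l2 UNIV" "g \<in> l2 UNIV" for f g
    using that by (intro l2_inner_model_map) (simp_all add: l2_UNIV_iff)
  show "model_map (S f) = shift_sum (sum_param root_norm) (model_map f)" if "f \<in> l2 UNIV" for f
    using that model_map_shift by (auto simp: l2_UNIV_iff)
qed

lemma countable_branching_set:
  assumes nz: "\<And>v. v \<noteq> rt \<Longrightarrow> lam v \<noteq> 0"
  shows "countable (branching_set par rt k)"
proof -
  have "countable (Chi u)" for u
  proof -
    have "countable {x \<in> Chi u. (cmod (lam x))\<^sup>2 \<noteq> 0}"
      using square_summable_weights[of u] by (intro summable_countable_real) (simp add: square_summable_def)
    also have "{x \<in> Chi u. (cmod (lam x))\<^sup>2 \<noteq> 0} = Chi u" using nz by (auto simp: mem_children_iff)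
    finally show ?thesis .
  qed
  moreover from this have "countable (generation par rt n)" for n
    by (induction n) simp_all
  ultimately show ?thesis unfolding branching_set_def
    by (intro countable_SIGMA countable_Diff) auto
qed

end

theorem mainTheorem15:
  fixes par :: "'v \<Rightarrow> 'v" and rt :: 'v and lam :: "'v \<Rightarrow> complex"
  assumes tree: "rooted_tree par rt"
    and bdd: "bounded_on_l2 UNIV (tree_shift par rt lam)"
    and twoiso: "two_isometry UNIV (tree_shift par rt lam)"
    and alpha: "\<exists>\<alpha> :: 'v \<Rightarrow> real. (\<forall>v. \<alpha> v \<ge> 0) \<and>
                  (\<forall>u. u \<noteq> rt \<longrightarrow>
                     l2_norm (tree_shift par rt lam (unit_vec u)) = \<alpha> (par u))"
  shows "leafless par rt \<and>
         unitarily_equivalent UNIV (tree_shift par rt lam)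
           (sum_index par rt \<times> UNIV)
           (shift_sum (sum_param (l2_norm (tree_shift par rt lam (unit_vec rt))))) \<and>
         ((\<forall>v. v \<noteq> rt \<longrightarrow> lam v \<noteq> 0) \<longrightarrow>
            (\<forall>k\<ge>1. countable (branching_set par rt k)))"
proof -
  obtain \<alpha> :: "'v \<Rightarrow> real"
    where \<alpha>: "\<And>u. u \<noteq> rt \<Longrightarrow> l2_norm (tree_shift par rt lam (unit_vec u)) = \<alpha> (par u)"
    using alpha by blast
  interpret two_isometric_tree_shift par rt lam \<alpha>
    by unfold_locales (use tree bdd twoiso \<alpha> in auto)
  show ?thesis
    using leafless unitarily_equivalent_model countable_branching_set unfolding root_norm_def by blast
qed

end
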